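(* Let $R$ be a commutative Noetherian ring and $\phi\colon\mathbb{Z}\to\mathsf{P}(\operatorname{Spec}(R))$ an sp-filtration satisfying the weak Cousin condition. Then there exists an integer $j_0$ such that $\phi(j)=\phi(j_0)$ for all $j\le j_0$, and the subset $\phi(j_0)\subset\operatorname{Spec}(R)$ is open and closed. Also, the set $\bigcap_{i\in\mathbb{Z}}\phi(i)$ is open and closed.
   Context: An sp-filtration is a decreasing map $\phi\colon\mathbb{Z}\to\mathsf{P}(\operatorname{Spec}(R))$ (i.e. $\phi(i)\supset\phi(i+1)$) whose values are subsets stable under specialization. $\phi$ satisfies the weak Cousin condition if for every $j\in\mathbb{Z}$ and primes ${\mathfrak p}\subsetneq{\mathfrak q}$ with no prime strictly between them, ${\mathfrak q}\in\phi(j)$ implies ${\mathfrak p}\in\phi(j-1)$. Topology on $\operatorname{Spec}(R)$ is the Zariski topology. *)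

theory Defs
  imports "HOL-Algebra.Ring_Divisibility" "HOL-Algebra.Ideal"
begin

definition Spec :: "('a, 'b) ring_scheme \<Rightarrow> 'a set set" where
  "Spec R = {P. primeideal P R}"

definition zariski_closed :: "('a, 'b) ring_scheme \<Rightarrow> 'a set set \<Rightarrow> bool" where
  "zariski_closed R S \<longleftrightarrow> (\<exists>I. I \<subseteq> carrier R \<and> S = {P \<in> Spec R. I \<subseteq> P})"

definition zariski_open :: "('a, 'b) ring_scheme \<Rightarrow> 'a set set \<Rightarrow> bool" where
  "zariski_open R U \<longleftrightarrow> U \<subseteq> Spec R \<and> zariski_closed R (Spec R - U)"

definition specialization_closed :: "('a, 'b) ring_scheme \<Rightarrow> 'a set set \<Rightarrow> bool" where
  "specialization_closed R S \<longleftrightarrow> S \<subseteq> Spec R \<and>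
     (\<forall>P Q. P \<in> S \<and> Q \<in> Spec R \<and> P \<subseteq> Q \<longrightarrow> Q \<in> S)"

definition sp_filtration :: "('a, 'b) ring_scheme \<Rightarrow> (int \<Rightarrow> 'a set set) \<Rightarrow> bool" where
  "sp_filtration R \<phi> \<longleftrightarrow> (\<forall>i. specialization_closed R (\<phi> i)) \<and> (\<forall>i. \<phi> (i + 1) \<subseteq> \<phi> i)"

definition weak_cousin :: "('a, 'b) ring_scheme \<Rightarrow> (int \<Rightarrow> 'a set set) \<Rightarrow> bool" where
  "weak_cousin R \<phi> \<longleftrightarrow> (\<forall>j P Q. P \<in> Spec R \<and> Q \<in> Spec R \<and> P \<subset> Q \<and>
       \<not> (\<exists>T \<in> Spec R. P \<subset> T \<and> T \<subset> Q) \<and> Q \<in> \<phi> j \<longrightarrow> P \<in> \<phi> (j - 1))"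

end

theory Submission
  imports Defs
begin

text \<open>Over a Noetherian ring every prime contains one of finitely many minimal primes, and for
  primes \<open>P \<subseteq> Q\<close> the weak Cousin condition carries \<open>Q \<in> \<phi> j\<close> down to \<open>P \<in> \<phi> (j - n)\<close>:
  a maximal prime between \<open>P\<close> and \<open>Q\<close> where this fails would have a covering prime above it
  inside \<open>Q\<close>, which exists by Krull's principal ideal theorem, where it holds.
  Hence \<open>\<Union>i. \<phi> i\<close> and \<open>\<Inter>i. \<phi> i\<close> are stable under generization as well as
  specialization, so they and their complements are finite unions of sets \<open>V(p)\<close> with \<open>p\<close>
  minimal, i.e. they are open and closed. Finally \<open>\<Union>i. \<phi> i\<close> is already attained at a level
  \<open>j\<^sub>0\<close> containing its finitely many minimal primes, and \<open>\<phi>\<close> is constant below \<open>j\<^sub>0\<close>.\<close>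

lemma (in ideal) subset_carrier: "I \<subseteq> carrier R"
  by (rule a_subset)

lemma (in ideal) minus_mem: "a \<in> I \<Longrightarrow> b \<in> I \<Longrightarrow> a \<ominus> b \<in> I"
  by (simp add: a_minus_def)

lemma (in ideal) zero_mem: "\<zero> \<in> I"
  by (rule additive_subgroup.zero_closed[OF is_additive_subgroup])

lemma (in ideal) add_mem: "a \<in> I \<Longrightarrow> b \<in> I \<Longrightarrow> a \<oplus> b \<in> I"
  by (rule additive_subgroup.a_closed[OF is_additive_subgroup])

lemma (in ideal) a_inv_mem: "a \<in> I \<Longrightarrow> \<ominus> a \<in> I"
  by (rule additive_subgroup.a_inv_closed[OF is_additive_subgroup])

lemma (in primeideal) one_notin: "\<one> \<notin> I"
  using I_notcarr one_imp_carrier by blast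

lemma (in cring) ideal_closedI:
  assumes "I \<subseteq> carrier R" "\<zero> \<in> I" "\<And>a b. a \<in> I \<Longrightarrow> b \<in> I \<Longrightarrow> a \<oplus> b \<in> I"
    "\<And>a r. a \<in> I \<Longrightarrow> r \<in> carrier R \<Longrightarrow> r \<otimes> a \<in> I"
  shows "ideal I R"
proof (rule idealI[OF ring_axioms])
  show "subgroup I (add_monoid R)"
  proof
    fix x assume x: "x \<in> I"
    hence "\<ominus> x = (\<ominus> \<one>) \<otimes> x" using assms(1) by (auto simp: l_minus)
    thus "inv\<^bsub>add_monoid R\<^esub> x \<in> I" using assms(4)[OF x, of "\<ominus> \<one>"] by (simp add: a_inv_def)
  qed (use assms in auto)
  fix a x assume a: "a \<in> I" and x: "x \<in> carrier R"
  show "x \<otimes> a \<in> I" using assms(4) a x .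
  thus "a \<otimes> x \<in> I" using a x assms(1) m_comm[of x a] by (simp add: subsetD)
qed

lemma (in cring) primeideal_pow_mem:
  assumes "primeideal P R" "y \<in> carrier R" "y [^] (n::nat) \<in> P"
  shows "y \<in> P"
  using assms(3)
proof (induction n)
  case 0 thus ?case using primeideal.one_notin[OF assms(1)] by simp
next
  case (Suc n)
  hence "y \<otimes> y [^] n \<in> P" using assms(2) by (simp add: m_comm)
  thus ?case using primeideal.I_prime[OF assms(1)] assms(2) Suc.IH by blast
qed

lemma mem_set_add_iff: "z \<in> I <+>\<^bsub>R\<^esub> J \<longleftrightarrow> (\<exists>i\<in>I. \<exists>j\<in>J. z = i \<oplus>\<^bsub>R\<^esub> j)"
  unfolding set_add_def' by auto

lemma mem_cgenideal_iff: "z \<in> PIdl\<^bsub>R\<^esub> a \<longleftrightarrow> (\<exists>r\<in>carrier R. z = r \<otimes>\<^bsub>R\<^esub> a)"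
  unfolding cgenideal_def by auto

context ring begin

lemma set_add_mono_left: "X \<subseteq> M \<Longrightarrow> X <+>\<^bsub>R\<^esub> E \<subseteq> M <+>\<^bsub>R\<^esub> E"
  unfolding set_add_def' by blast

lemma set_add_subset_left: assumes "ideal E R" "X \<subseteq> carrier R" shows "X \<subseteq> X <+>\<^bsub>R\<^esub> E"
proof
  fix a assume "a \<in> X"
  moreover have "a = a \<oplus> \<zero>" using \<open>a \<in> X\<close> assms(2) by auto
  ultimately show "a \<in> X <+>\<^bsub>R\<^esub> E" unfolding mem_set_add_iff using ideal.zero_mem[OF assms(1)] by blast
qed

lemma set_add_subset_right: assumes "ideal X R" "E \<subseteq> carrier R" shows "E \<subseteq> X <+>\<^bsub>R\<^esub> E"
proof
  fix a assume "a \<in> E"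
  moreover have "a = \<zero> \<oplus> a" using \<open>a \<in> E\<close> assms(2) by auto
  ultimately show "a \<in> X <+>\<^bsub>R\<^esub> E" unfolding mem_set_add_iff using ideal.zero_mem[OF assms(1)] by blast
qed

lemma genideal_of_ideal: "ideal K R \<Longrightarrow> Idl K = K"
  using genideal_minimal genideal_self ideal.subset_carrier by blast

lemma genideal_Un_absorb:
  assumes "A \<subseteq> carrier R" "J \<subseteq> Idl A"
  shows "Idl (J \<union> A) = Idl A"
proof (rule subset_antisym)
  have "J \<union> A \<subseteq> Idl A" using assms genideal_self by blast
  thus "Idl (J \<union> A) \<subseteq> Idl A" using genideal_minimal[OF genideal_ideal[OF assms(1)]] by simp
  have JA: "J \<union> A \<subseteq> carrier R" using assms ideal.subset_carrier[OF genideal_ideal[OF assms(1)]] by blast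
  hence "A \<subseteq> Idl (J \<union> A)" using genideal_self by blast
  thus "Idl A \<subseteq> Idl (J \<union> A)" using genideal_minimal[OF genideal_ideal[OF JA]] by simp
qed

lemma genideal_Un_genideal:
  assumes "S \<subseteq> carrier R" "A \<subseteq> carrier R"
  shows "Idl (Idl S \<union> A) = Idl (S \<union> A)"
proof (rule subset_antisym)
  have SA: "S \<union> A \<subseteq> carrier R" using assms by simp
  have "Idl S \<subseteq> Idl (S \<union> A)" using genideal_minimal[OF genideal_ideal[OF SA]] genideal_self[OF SA] by blast
  hence "Idl S \<union> A \<subseteq> Idl (S \<union> A)" using genideal_self[OF SA] by blast
  thus "Idl (Idl S \<union> A) \<subseteq> Idl (S \<union> A)" using genideal_minimal[OF genideal_ideal[OF SA]] by simp
  have IA: "Idl S \<union> A \<subseteq> carrier R" using ideal.subset_carrier[OF genideal_ideal[OF assms(1)]] assms(2) by blast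
  have "S \<union> A \<subseteq> Idl S \<union> A" using genideal_self[OF assms(1)] by blast
  hence "S \<union> A \<subseteq> Idl (Idl S \<union> A)" using genideal_self[OF IA] by blast
  thus "Idl (S \<union> A) \<subseteq> Idl (Idl S \<union> A)" using genideal_minimal[OF genideal_ideal[OF IA]] by simp
qed

end

lemma (in cring) genideal_insert:
  assumes K: "ideal K R" and g: "g \<in> carrier R"
  shows "Idl (insert g K) = K <+>\<^bsub>R\<^esub> PIdl g"
proof -
  have Kc: "K \<subseteq> carrier R" using ideal.subset_carrier[OF K] .
  have Pg: "ideal (PIdl g) R" using cgenideal_ideal[OF g] .
  have I: "ideal (Idl (insert g K)) R" using genideal_ideal Kc g by simp
  have gen: "insert g K \<subseteq> Idl (insert g K)" using genideal_self[of "insert g K"] Kc g by simp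
  have "Idl (insert g K) = Idl (K \<union> PIdl g)"
  proof (rule subset_antisym)
    have s: "K \<union> PIdl g \<subseteq> carrier R" using Kc ideal.subset_carrier[OF Pg] by simp
    have "insert g K \<subseteq> Idl (K \<union> PIdl g)" using genideal_self[OF s] cgenideal_self[OF g] by blast
    thus "Idl (insert g K) \<subseteq> Idl (K \<union> PIdl g)" using genideal_minimal[OF genideal_ideal[OF s]] by simp
    have "PIdl g \<subseteq> Idl (insert g K)" using cgenideal_minimal[OF I] gen by simp
    thus "Idl (K \<union> PIdl g) \<subseteq> Idl (insert g K)" using genideal_minimal[OF I] gen by simp
  qed
  also have "\<dots> = K <+>\<^bsub>R\<^esub> PIdl g" using union_genideal[OF K Pg] .
  finally show ?thesis .
qed

definition colon :: "('a, 'b) ring_scheme \<Rightarrow> 'a set \<Rightarrow> 'a set \<Rightarrow> 'a set" where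
  "colon R J E = {y \<in> carrier R. \<forall>e\<in>E. y \<otimes>\<^bsub>R\<^esub> e \<in> J}"

lemma (in cring) colon_ideal:
  assumes "ideal J R" "E \<subseteq> carrier R"
  shows "ideal (colon R J E) R"
proof (rule ideal_closedI)
  interpret J: ideal J R by fact
  show "colon R J E \<subseteq> carrier R" "\<zero> \<in> colon R J E"
    unfolding colon_def using assms(2) by auto
  fix a b r assume a: "a \<in> colon R J E"
  { assume b: "b \<in> colon R J E"
    have "(a \<oplus> b) \<otimes> e = a \<otimes> e \<oplus> b \<otimes> e" if "e \<in> E" for e
      using a b that assms(2) by (auto simp: colon_def l_distr)
    thus "a \<oplus> b \<in> colon R J E" using a b unfolding colon_def by auto }
  assume r: "r \<in> carrier R"
  have "(r \<otimes> a) \<otimes> e = r \<otimes> (a \<otimes> e)" if "e \<in> E" for e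
    using a r that assms(2) by (auto simp: colon_def m_assoc)
  thus "r \<otimes> a \<in> colon R J E" using a r J.I_l_closed unfolding colon_def by auto
qed

lemma (in cring) maximal_colon_primeideal:
  assumes J: "ideal J R" and y0: "y0 \<in> carrier R" "y0 \<notin> J"
    and max: "\<And>y. y \<in> carrier R \<Longrightarrow> y \<notin> J \<Longrightarrow> colon R J {y0} \<subseteq> colon R J {y}
                   \<Longrightarrow> colon R J {y} = colon R J {y0}"
  shows "primeideal (colon R J {y0}) R"
proof (rule primeidealI[OF colon_ideal[OF J] is_cring])
  have mem: "z \<in> colon R J {y} \<longleftrightarrow> z \<in> carrier R \<and> z \<otimes> y \<in> J" for z y
    unfolding colon_def by simp
  show "{y0} \<subseteq> carrier R" using y0 by simp
  show "carrier R \<noteq> colon R J {y0}" using mem[of \<one> y0] y0 by auto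
  fix a b assume a: "a \<in> carrier R" and b: "b \<in> carrier R" and ab: "a \<otimes> b \<in> colon R J {y0}"
  show "a \<in> colon R J {y0} \<or> b \<in> colon R J {y0}"
  proof (cases "a \<in> colon R J {y0}")
    case False
    hence ay: "a \<otimes> y0 \<notin> J" using mem a by blast
    have "colon R J {y0} \<subseteq> colon R J {a \<otimes> y0}"
    proof
      fix z assume "z \<in> colon R J {y0}"
      hence z: "z \<in> carrier R" "z \<otimes> y0 \<in> J" using mem by auto
      hence "z \<otimes> (a \<otimes> y0) = a \<otimes> (z \<otimes> y0)" using a y0 by (simp add: m_lcomm)
      thus "z \<in> colon R J {a \<otimes> y0}" using mem z ideal.I_l_closed[OF J z(2) a] by simp
    qed
    hence eq: "colon R J {a \<otimes> y0} = colon R J {y0}" using max ay a y0 by simp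
    have "b \<otimes> (a \<otimes> y0) = (a \<otimes> b) \<otimes> y0" using a b y0 by (simp add: m_assoc m_lcomm m_comm)
    hence "b \<in> colon R J {a \<otimes> y0}" using mem ab b by simp
    thus ?thesis using eq by simp
  qed simp
qed

section \<open>Localisation at a prime via saturation\<close>

text \<open>HOL-Algebra has no localisation: \<open>saturation R T J\<close> is the contraction \<open>J R\<^sub>T \<inter> R\<close>,
  and \<open>saturated R T J\<close> means \<open>J = J R\<^sub>T \<inter> R\<close>.\<close>

definition saturation :: "('a, 'b) ring_scheme \<Rightarrow> 'a set \<Rightarrow> 'a set \<Rightarrow> 'a set" where
  "saturation R T J = {r \<in> carrier R. \<exists>s \<in> carrier R - T. s \<otimes>\<^bsub>R\<^esub> r \<in> J}"

definition saturated :: "('a, 'b) ring_scheme \<Rightarrow> 'a set \<Rightarrow> 'a set \<Rightarrow> bool" where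
  "saturated R T J \<longleftrightarrow> (\<forall>s \<in> carrier R - T. \<forall>r \<in> carrier R. s \<otimes>\<^bsub>R\<^esub> r \<in> J \<longrightarrow> r \<in> J)"

context cring begin

lemma saturation_ideal:
  assumes T: "primeideal T R" and J: "ideal J R"
  shows "ideal (saturation R T J) R"
proof (rule ideal_closedI)
  interpret J: ideal J R by fact
  interpret T: primeideal T R by fact
  show "saturation R T J \<subseteq> carrier R" unfolding saturation_def by auto
  show "\<zero> \<in> saturation R T J" unfolding saturation_def using T.one_notin by (auto intro!: bexI[of _ \<one>])
  fix a b r assume "a \<in> saturation R T J"
  then obtain s where s: "s \<in> carrier R" "s \<notin> T" "s \<otimes> a \<in> J" and a: "a \<in> carrier R"
    unfolding saturation_def by auto
  { assume r: "r \<in> carrier R"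
    have "s \<otimes> (r \<otimes> a) = r \<otimes> (s \<otimes> a)" using s r a by (metis m_lcomm)
    thus "r \<otimes> a \<in> saturation R T J"
      unfolding saturation_def using s r a J.I_l_closed[OF s(3) r] by (auto intro!: bexI[of _ s]) }
  assume "b \<in> saturation R T J"
  then obtain t where t: "t \<in> carrier R" "t \<notin> T" "t \<otimes> b \<in> J" and b: "b \<in> carrier R"
    unfolding saturation_def by auto
  have "(s \<otimes> t) \<otimes> (a \<oplus> b) = t \<otimes> (s \<otimes> a) \<oplus> s \<otimes> (t \<otimes> b)"
    using s t a b by algebra
  also have "\<dots> \<in> J" using J.I_l_closed J.add_mem s t by simp
  finally show "a \<oplus> b \<in> saturation R T J"
    unfolding saturation_def using T.I_prime s t a b by auto
qed

lemma subset_saturation: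
  assumes "primeideal T R" "J \<subseteq> carrier R"
  shows "J \<subseteq> saturation R T J"
  unfolding saturation_def using primeideal.one_notin[OF assms(1)] assms(2)
  by (auto intro!: bexI[of _ \<one>])

lemma saturation_mono: "J \<subseteq> J' \<Longrightarrow> saturation R T J \<subseteq> saturation R T J'"
  unfolding saturation_def by auto

lemma saturated_saturation:
  assumes T: "primeideal T R"
  shows "saturated R T (saturation R T J)"
  unfolding saturated_def
proof (intro ballI impI)
  fix s r assume s: "s \<in> carrier R - T" and r: "r \<in> carrier R" and "s \<otimes> r \<in> saturation R T J"
  then obtain t where t: "t \<in> carrier R" "t \<notin> T" "t \<otimes> (s \<otimes> r) \<in> J" unfolding saturation_def by auto
  have "(t \<otimes> s) \<otimes> r \<in> J" using t s r by (simp add: m_assoc)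
  moreover have "t \<otimes> s \<notin> T" using primeideal.I_prime[OF T, of t s] s t by auto
  ultimately show "r \<in> saturation R T J" unfolding saturation_def using s t r by auto
qed

lemma saturation_subset: "saturated R T J \<Longrightarrow> J \<subseteq> carrier R \<Longrightarrow> saturation R T J \<subseteq> J"
  unfolding saturated_def saturation_def by auto

lemma saturation_least:
  assumes "primeideal T R" "J \<subseteq> saturation R T I"
  shows "saturation R T J \<subseteq> saturation R T I"
proof -
  have "saturation R T J \<subseteq> saturation R T (saturation R T I)" using saturation_mono[OF assms(2)] .
  also have "\<dots> \<subseteq> saturation R T I"
    using saturation_subset[OF saturated_saturation[OF assms(1)]] unfolding saturation_def by blast
  finally show ?thesis .
qed

lemma saturated_subset_prime: "saturated R p J \<Longrightarrow> p \<subseteq> T \<Longrightarrow> saturated R T J"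
  unfolding saturated_def by auto

lemma primeideal_saturated: "primeideal P R \<Longrightarrow> P \<subseteq> T \<Longrightarrow> saturated R T P"
  unfolding saturated_def using primeideal.I_prime by fastforce

end

text \<open>\<open>pow_plus R T P k\<close> is the ideal \<open>P + T\<^sup>k\<close>, generated recursively without ideal products.\<close>

primrec pow_plus :: "('a, 'b) ring_scheme \<Rightarrow> 'a set \<Rightarrow> 'a set \<Rightarrow> nat \<Rightarrow> 'a set" where
  "pow_plus R T P 0 = carrier R"
| "pow_plus R T P (Suc k) = genideal R (P \<union> {t \<otimes>\<^bsub>R\<^esub> e | t e. t \<in> T \<and> e \<in> pow_plus R T P k})"

context cring begin

context
  fixes T P :: "'a set"
  assumes T: "T \<subseteq> carrier R" and P: "P \<subseteq> carrier R"
begin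

lemma pow_plus_ideal: "ideal (pow_plus R T P k) R"
proof (induction k)
  case (Suc k)
  have "{t \<otimes> e | t e. t \<in> T \<and> e \<in> pow_plus R T P k} \<subseteq> carrier R"
    using T ideal.Icarr[OF Suc] by auto
  thus ?case using genideal_ideal P by simp
qed (simp add: oneideal)

lemma pow_plus_Suc_generators:
  "P \<union> {t \<otimes> e | t e. t \<in> T \<and> e \<in> pow_plus R T P k} \<subseteq> pow_plus R T P (Suc k)"
proof -
  have "P \<union> {t \<otimes> e | t e. t \<in> T \<and> e \<in> pow_plus R T P k} \<subseteq> carrier R"
    using T P ideal.Icarr[OF pow_plus_ideal] by auto
  thus ?thesis using genideal_self by (simp only: pow_plus.simps)
qed

lemma subset_pow_plus: "P \<subseteq> pow_plus R T P k"
  using pow_plus_Suc_generators P by (cases k) auto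

lemma mult_mem_pow_plus: "t \<in> T \<Longrightarrow> e \<in> pow_plus R T P k \<Longrightarrow> t \<otimes> e \<in> pow_plus R T P (Suc k)"
  using pow_plus_Suc_generators by blast

lemma pow_plus_Suc_least:
  assumes "ideal J R" "P \<subseteq> J" "\<And>t e. t \<in> T \<Longrightarrow> e \<in> pow_plus R T P k \<Longrightarrow> t \<otimes> e \<in> J"
  shows "pow_plus R T P (Suc k) \<subseteq> J"
proof -
  have "P \<union> {t \<otimes> e | t e. t \<in> T \<and> e \<in> pow_plus R T P k} \<subseteq> J" using assms(2,3) by auto
  thus ?thesis using genideal_minimal[OF assms(1)] by simp
qed

lemma pow_plus_Suc_subset: "pow_plus R T P (Suc k) \<subseteq> pow_plus R T P k"
  by (rule pow_plus_Suc_least[OF pow_plus_ideal subset_pow_plus])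
     (use ideal.I_l_closed[OF pow_plus_ideal] T in blast)

lemma pow_mem_pow_plus: "y \<in> T \<Longrightarrow> y [^] k \<in> pow_plus R T P k"
proof (induction k)
  case (Suc k)
  hence "y \<otimes> y [^] k \<in> pow_plus R T P (Suc k)" using mult_mem_pow_plus by blast
  thus ?case using Suc.prems T by (simp add: m_comm subsetD)
qed simp

end

end

context noetherian_ring begin

lemma ideal_family_has_maximal:
  assumes "F \<noteq> {}" "\<And>I. I \<in> F \<Longrightarrow> ideal I R"
  shows "\<exists>M\<in>F. \<forall>X\<in>F. M \<subseteq> X \<longrightarrow> X = M"
proof (rule subset_Zorn_nonempty[OF assms(1)])
  fix C assume C: "C \<noteq> {}" "subset.chain F C"
  hence CF: "C \<subseteq> F" unfolding pred_on.chain_def by simp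
  have "subset.chain {I. ideal I R} C" using C(2) assms(2) unfolding pred_on.chain_def by auto
  hence "\<Union>C \<in> C" by (rule ideal_chain_is_trivial[OF C(1)])
  thus "\<Union>C \<in> F" using CF by blast
qed

lemma ascending_ideal_sequence_stabilizes:
  assumes "\<And>k. ideal (c k) R" "\<And>k. c k \<subseteq> c (Suc k)"
  shows "\<exists>k. c (Suc k) = c k"
proof -
  obtain k where "\<forall>X\<in>range c. c k \<subseteq> X \<longrightarrow> X = c k"
    using ideal_family_has_maximal[of "range c"] assms(1) by blast
  thus ?thesis using assms(2) by blast
qed

end

locale noetherian_cring = noetherian_ring R + cring R for R (structure)

definition finite_prime_cover :: "('a, 'b) ring_scheme \<Rightarrow> 'a set \<Rightarrow> 'a set set \<Rightarrow> bool" where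
  "finite_prime_cover R I F \<longleftrightarrow> finite F \<and> (\<forall>f\<in>F. primeideal f R \<and> I \<subseteq> f) \<and>
     (\<forall>Q. primeideal Q R \<and> I \<subseteq> Q \<longrightarrow> (\<exists>f\<in>F. f \<subseteq> Q))"

lemma (in cring) finite_prime_cover_Un:
  assumes M: "ideal M R" and ab: "a \<in> carrier R" "b \<in> carrier R" "a \<otimes> b \<in> M"
    and Fa: "finite_prime_cover R (Idl (insert a M)) Fa"
    and Fb: "finite_prime_cover R (Idl (insert b M)) Fb"
  shows "finite_prime_cover R M (Fa \<union> Fb)"
proof -
  have Mc: "M \<subseteq> carrier R" using ideal.subset_carrier[OF M] .
  have "M \<subseteq> Idl (insert a M)" "M \<subseteq> Idl (insert b M)"
    using genideal_self[of "insert a M"] genideal_self[of "insert b M"] ab(1,2) Mc by auto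
  hence "\<forall>f\<in>Fa \<union> Fb. primeideal f R \<and> M \<subseteq> f"
    using Fa Fb unfolding finite_prime_cover_def by (meson Un_iff subset_trans)
  moreover have cover: "\<exists>f\<in>Fa \<union> Fb. f \<subseteq> Q" if Q: "primeideal Q R" "M \<subseteq> Q" for Q
  proof -
    have "a \<in> Q \<or> b \<in> Q" using primeideal.I_prime[OF Q(1)] ab Q(2) by blast
    hence "Idl (insert a M) \<subseteq> Q \<or> Idl (insert b M) \<subseteq> Q"
      using genideal_minimal[OF primeideal.axioms(1)[OF Q(1)]] Q(2) by (meson insert_subset)
    thus ?thesis using Fa Fb Q(1) unfolding finite_prime_cover_def by (meson Un_iff)
  qed
  ultimately show ?thesis using Fa Fb unfolding finite_prime_cover_def
    by (intro conjI allI impI) (simp_all add: cover)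
qed

context noetherian_cring begin

lemma ex_finite_prime_cover:
  assumes "ideal I R"
  shows "\<exists>F. finite_prime_cover R I F"
proof (rule ccontr)
  let ?Bad = "{I. ideal I R \<and> \<not> (\<exists>F. finite_prime_cover R I F)}"
  assume "\<nexists>F. finite_prime_cover R I F"
  hence "?Bad \<noteq> {}" using assms by blast
  then obtain M where "M \<in> ?Bad" and Mmax: "\<forall>X\<in>?Bad. M \<subseteq> X \<longrightarrow> X = M"
    using ideal_family_has_maximal[of ?Bad] by blast
  hence M: "ideal M R" "\<nexists>F. finite_prime_cover R M F" by auto
  interpret M: ideal M R by fact
  have ext: "\<exists>F. finite_prime_cover R (Idl (insert c M)) F" if c: "c \<in> carrier R" "c \<notin> M" for c
  proof -
    have "M \<subseteq> Idl (insert c M)" "c \<in> Idl (insert c M)"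
      using genideal_self[of "insert c M"] c M.subset_carrier by auto
    hence "Idl (insert c M) \<noteq> M" "M \<subseteq> Idl (insert c M)" using c by auto
    moreover have "ideal (Idl (insert c M)) R" using genideal_ideal c M.subset_carrier by simp
    ultimately show ?thesis using Mmax[rule_format, of "Idl (insert c M)"] by (simp only: mem_Collect_eq) blast
  qed
  have "\<not> primeideal M R"
  proof
    assume "primeideal M R"
    hence "finite_prime_cover R M {M}" unfolding finite_prime_cover_def by auto
    with M(2) show False by blast
  qed
  thus False
  proof (rule M.primeidealCE[OF is_cring])
    assume "carrier R = M"
    hence "\<not> (primeideal Q R \<and> M \<subseteq> Q)" for Q using primeideal.one_notin[of Q R] by auto
    hence "finite_prime_cover R M {}" unfolding finite_prime_cover_def by simp
    with M(2) show False by blast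
  next
    assume "\<exists>a b. a \<in> carrier R \<and> b \<in> carrier R \<and> a \<otimes> b \<in> M \<and> a \<notin> M \<and> b \<notin> M"
    then obtain a b where ab: "a \<in> carrier R" "b \<in> carrier R" "a \<otimes> b \<in> M" "a \<notin> M" "b \<notin> M"
      by auto
    obtain Fa Fb where "finite_prime_cover R (Idl (insert a M)) Fa" "finite_prime_cover R (Idl (insert b M)) Fb"
      using ext[OF ab(1,4)] ext[OF ab(2,5)] by blast
    with M(2) show False using finite_prime_cover_Un[OF M(1) ab(1-3)] by blast
  qed
qed

lemma finite_minimal_primes:
  "\<exists>F. finite F \<and> (\<forall>f\<in>F. primeideal f R) \<and> (\<forall>Q. primeideal Q R \<longrightarrow> (\<exists>f\<in>F. f \<subseteq> Q))"
proof -
  have "{\<zero>} \<subseteq> Q" if "primeideal Q R" for Q using ideal.zero_mem[OF primeideal.axioms(1)[OF that]] by simp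
  thus ?thesis using ex_finite_prime_cover[OF zeroideal] unfolding finite_prime_cover_def by metis
qed

lemma minimal_prime_between:
  assumes I: "ideal I R" and Q: "primeideal Q R" "I \<subseteq> Q"
  shows "\<exists>T. primeideal T R \<and> I \<subseteq> T \<and> T \<subseteq> Q \<and>
      (\<forall>T'. primeideal T' R \<and> I \<subseteq> T' \<and> T' \<subseteq> T \<longrightarrow> T' = T)"
proof -
  obtain F where F: "finite F" "\<forall>f\<in>F. primeideal f R \<and> I \<subseteq> f"
     "\<forall>Q. primeideal Q R \<and> I \<subseteq> Q \<longrightarrow> (\<exists>f\<in>F. f \<subseteq> Q)"
    using ex_finite_prime_cover[OF I] unfolding finite_prime_cover_def by blast
  have "finite {f\<in>F. f \<subseteq> Q}" "{f\<in>F. f \<subseteq> Q} \<noteq> {}" using F(1,3) Q by auto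
  from finite_has_minimal[OF this] obtain T
    where T: "T \<in> F" "T \<subseteq> Q" and Tmin: "\<forall>f\<in>{f\<in>F. f \<subseteq> Q}. f \<subseteq> T \<longrightarrow> T = f"
    by blast
  have "primeideal T R" "I \<subseteq> T" using T(1) F(2) by auto
  moreover have "T' = T" if T': "primeideal T' R" "I \<subseteq> T'" "T' \<subseteq> T" for T'
  proof -
    obtain f where f: "f \<in> F" "f \<subseteq> T'" using F(3) T'(1,2) by blast
    hence "f \<subseteq> T" "f \<subseteq> Q" using T'(3) T(2) by auto
    hence "T = f" using Tmin f(1) by simp
    thus ?thesis using f(2) T'(3) by simp
  qed
  ultimately show ?thesis using T(2) by (intro exI[of _ T] conjI allI impI) auto
qed

end

context cring begin

lemma colon_antimono: "E \<subseteq> E' \<Longrightarrow> colon R N E' \<subseteq> colon R N E"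
  unfolding colon_def by auto

lemma colon_carrier:
  assumes "ideal N R"
  shows "colon R N (carrier R) = N"
proof
  show "colon R N (carrier R) \<subseteq> N"
  proof
    fix y assume "y \<in> colon R N (carrier R)"
    hence y: "y \<in> carrier R" and "\<forall>e\<in>carrier R. y \<otimes> e \<in> N" unfolding colon_def by auto
    hence "y \<otimes> \<one> \<in> N" by blast
    thus "y \<in> N" using y by simp
  qed
  show "N \<subseteq> colon R N (carrier R)"
    unfolding colon_def using ideal.I_r_closed[OF assms] ideal.subset_carrier[OF assms] by blast
qed

lemma colon_saturated:
  assumes "saturated R T N" "E \<subseteq> carrier R"
  shows "saturated R T (colon R N E)"
  unfolding saturated_def
proof (intro ballI impI)
  fix s y assume s: "s \<in> carrier R - T" and y: "y \<in> carrier R" and "s \<otimes> y \<in> colon R N E"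
  hence "s \<otimes> (y \<otimes> e) \<in> N" if "e \<in> E" for e
    using that assms(2) unfolding colon_def by (auto simp: m_assoc subsetD)
  hence "y \<otimes> e \<in> N" if "e \<in> E" for e
    using that assms(1) s y m_closed[OF y, of e] assms(2) unfolding saturated_def by blast
  thus "y \<in> colon R N E" unfolding colon_def using y by blast
qed

lemma mem_colon_pow_plus_Suc:
  assumes T: "T \<subseteq> carrier R" and P: "ideal P R" and N: "ideal N R" "P \<subseteq> N" and y: "y \<in> carrier R"
    and yT: "\<And>t. t \<in> T \<Longrightarrow> y \<otimes> t \<in> colon R N (pow_plus R T P k)"
  shows "y \<in> colon R N (pow_plus R T P (Suc k))"
proof -
  have Pc: "P \<subseteq> carrier R" using ideal.subset_carrier[OF P] .
  have mem: "e \<in> colon R N {y} \<longleftrightarrow> e \<in> carrier R \<and> y \<otimes> e \<in> N" for e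
    unfolding colon_def using y by (auto simp: m_comm)
  have "pow_plus R T P (Suc k) \<subseteq> colon R N {y}"
  proof (rule pow_plus_Suc_least[OF T Pc colon_ideal[OF N(1)]])
    show "{y} \<subseteq> carrier R" using y by simp
    show "P \<subseteq> colon R N {y}" using mem ideal.I_l_closed[OF P _ y] N(2) Pc by blast
    fix t e assume t: "t \<in> T" and e: "e \<in> pow_plus R T P k"
    have te: "t \<in> carrier R" "e \<in> carrier R"
      using t T e ideal.subset_carrier[OF pow_plus_ideal[OF T Pc]] by auto
    have "(y \<otimes> t) \<otimes> e \<in> N" using yT[OF t] e unfolding colon_def by blast
    thus "t \<otimes> e \<in> colon R N {y}" using mem te y by (simp add: m_assoc)
  qed
  thus ?thesis using mem y unfolding colon_def by blast
qed

end

context noetherian_cring begin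

text \<open>A maximal annihilator \<open>C : y\<^sub>0\<close> would be a prime between \<open>B\<close> and \<open>T\<close>, hence \<open>T\<close>,
  forcing \<open>y\<^sub>0 \<in> C\<close>.\<close>

lemma unit_mem_if_colon_prime_stable:
  assumes T: "primeideal T R" and Tmin: "\<And>Q. primeideal Q R \<Longrightarrow> B \<subseteq> Q \<Longrightarrow> Q \<subseteq> T \<Longrightarrow> Q = T"
    and C: "ideal C R" "saturated R T C" "B \<subseteq> C"
    and stable: "\<And>y. y \<in> carrier R \<Longrightarrow> (\<And>t. t \<in> T \<Longrightarrow> y \<otimes> t \<in> C) \<Longrightarrow> y \<in> C"
  shows "\<one> \<in> C"
proof (rule ccontr)
  assume "\<one> \<notin> C"
  define A where "A = (\<lambda>y. colon R C {y}) ` (carrier R - C)"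
  have "A \<noteq> {}" "\<And>I. I \<in> A \<Longrightarrow> ideal I R"
    unfolding A_def using \<open>\<one> \<notin> C\<close> colon_ideal[OF C(1)] by auto
  from ideal_family_has_maximal[OF this] obtain Q0
    where "Q0 \<in> A" and max: "\<forall>X\<in>A. Q0 \<subseteq> X \<longrightarrow> X = Q0" by blast
  then obtain y0 where y0: "y0 \<in> carrier R" "y0 \<notin> C" and Q0_def: "Q0 = colon R C {y0}"
    unfolding A_def by blast
  have Q0: "primeideal Q0 R"
    unfolding Q0_def using max unfolding A_def Q0_def by (intro maximal_colon_primeideal[OF C(1) y0]) auto
  have "C \<subseteq> Q0"
  proof
    fix z assume "z \<in> C"
    thus "z \<in> Q0" unfolding Q0_def colon_def
      using ideal.I_r_closed[OF C(1) _ y0(1)] ideal.subset_carrier[OF C(1)] by blast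
  qed
  moreover have "Q0 \<subseteq> T"
  proof
    fix a assume a: "a \<in> Q0"
    show "a \<in> T"
    proof (rule ccontr)
      assume "a \<notin> T"
      moreover have "a \<in> carrier R" "a \<otimes> y0 \<in> C" using a unfolding Q0_def colon_def by auto
      ultimately show False using C(2) y0 unfolding saturated_def by blast
    qed
  qed
  ultimately have "Q0 = T" using Tmin[OF Q0] C(3) by blast
  hence "y0 \<otimes> t \<in> C" if "t \<in> T" for t
    using that y0(1) ideal.subset_carrier[OF primeideal.axioms(1)[OF T]]
    unfolding Q0_def colon_def by (auto simp: m_comm subsetD)
  thus False using stable y0 by blast
qed

text \<open>The colon ideals \<open>B\<^sub>T : (B + T\<^sup>k)\<close> increase, and once they are stable they satisfy the
  hypotheses of \<open>unit_mem_if_colon_prime_stable\<close>.\<close>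

lemma pow_plus_subset_saturation:
  assumes T: "primeideal T R" and B: "ideal B R" "B \<subseteq> T"
    and Tmin: "\<And>Q. primeideal Q R \<Longrightarrow> B \<subseteq> Q \<Longrightarrow> Q \<subseteq> T \<Longrightarrow> Q = T"
  shows "\<exists>k. pow_plus R T B k \<subseteq> saturation R T B"
proof -
  have Tc: "T \<subseteq> carrier R" using ideal.subset_carrier[OF primeideal.axioms(1)[OF T]] .
  have Bc: "B \<subseteq> carrier R" using ideal.subset_carrier[OF B(1)] .
  define N where "N = saturation R T B"
  have N: "ideal N R" "saturated R T N" "B \<subseteq> N"
    unfolding N_def using saturation_ideal[OF T B(1)] saturated_saturation[OF T] subset_saturation[OF T Bc]
    by auto
  define c where "c k = colon R N (pow_plus R T B k)" for k
  have pc: "pow_plus R T B k \<subseteq> carrier R" for k using ideal.subset_carrier[OF pow_plus_ideal[OF Tc Bc]] .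
  have cid: "ideal (c k) R" for k unfolding c_def using colon_ideal[OF N(1) pc] .
  have cmono: "c k \<subseteq> c (Suc k)" for k
    unfolding c_def using colon_antimono[OF pow_plus_Suc_subset[OF Tc Bc]] .
  obtain k0 where ceq: "c (Suc k0) = c k0"
    using ascending_ideal_sequence_stabilizes[of c, OF cid cmono] by blast
  have "N \<subseteq> c k0"
    using lift_Suc_mono_le[of c, OF cmono, of 0 k0] colon_carrier[OF N(1)] unfolding c_def by simp
  moreover have "y \<in> c k0" if y: "y \<in> carrier R" "\<And>t. t \<in> T \<Longrightarrow> y \<otimes> t \<in> c k0" for y
  proof -
    have "y \<in> c (Suc k0)" using y unfolding c_def by (rule mem_colon_pow_plus_Suc[OF Tc B(1) N(1,3)])
    thus ?thesis using ceq by simp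
  qed
  ultimately have "\<one> \<in> c k0"
    using unit_mem_if_colon_prime_stable[OF T Tmin cid] colon_saturated[OF N(2) pc] N(3)
    unfolding c_def by blast
  have "e \<in> N" if "e \<in> pow_plus R T B k0" for e
  proof -
    have "\<one> \<otimes> e \<in> N" using \<open>\<one> \<in> c k0\<close> that unfolding c_def colon_def by blast
    moreover have "e \<in> carrier R" using pc that by blast
    ultimately show ?thesis by simp
  qed
  thus ?thesis unfolding N_def by blast
qed

end

lemma minimal_of_no_strict_descending:
  assumes "F \<noteq> {}" and "\<And>f. (\<And>n. f n \<in> F \<and> f (Suc n) \<subset> f n) \<Longrightarrow> False"
  shows "\<exists>M\<in>F. \<forall>X\<in>F. X \<subseteq> M \<longrightarrow> X = M"
proof -
  let ?r = "{(X, Y). X \<in> F \<and> Y \<in> F \<and> X \<subset> Y}"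
  have "wf ?r"
  proof (rule wf_iff_no_infinite_down_chain[THEN iffD2], rule notI)
    assume "\<exists>f. \<forall>i. (f (Suc i), f i) \<in> ?r"
    then obtain f where "\<forall>i. (f (Suc i), f i) \<in> ?r" by blast
    thus False using assms(2)[of f] by blast
  qed
  moreover obtain X where "X \<in> F" using assms(1) by blast
  ultimately obtain M where "M \<in> F" "\<And>Y. (Y, M) \<in> ?r \<Longrightarrow> Y \<notin> F"
    by (rule wfE_min) blast
  thus ?thesis by blast
qed

lemma (in cring) subset_of_saturation_set_add:
  assumes T: "primeideal T R" and E: "ideal E R" and J: "ideal J R" and J': "ideal J' R"
    and "J' \<subseteq> J" "saturated R T J'" "J \<inter> E \<subseteq> J'"
    and sat: "saturation R T (J <+>\<^bsub>R\<^esub> E) \<subseteq> saturation R T (J' <+>\<^bsub>R\<^esub> E)"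
  shows "J \<subseteq> J'"
proof
  fix a assume a: "a \<in> J"
  have Jc: "J \<subseteq> carrier R" using ideal.subset_carrier[OF J] .
  have "a \<in> saturation R T (J <+>\<^bsub>R\<^esub> E)"
    using a subset_saturation[OF T] set_add_subset_left[OF E Jc] ideal.subset_carrier[OF add_ideals[OF J E]]
    by blast
  then obtain s j e where s: "s \<in> carrier R" "s \<notin> T" and je: "j \<in> J'" "e \<in> E" "s \<otimes> a = j \<oplus> e"
    using sat unfolding saturation_def mem_set_add_iff by blast
  have "j \<in> carrier R" "e \<in> carrier R"
    using je ideal.subset_carrier[OF E] ideal.subset_carrier[OF J'] by auto
  hence "e = (j \<oplus> e) \<ominus> j" by algebra
  hence "e = s \<otimes> a \<ominus> j" using je(3) by simp
  moreover have "s \<otimes> a \<in> J" "j \<in> J" using ideal.I_l_closed[OF J a s(1)] je(1) assms(5) by auto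
  ultimately have "e \<in> J'" using ideal.minus_mem[OF J] je(2) assms(7) by auto
  hence "s \<otimes> a \<in> J'" using je ideal.add_mem[OF J'] by simp
  thus "a \<in> J'" using assms(6) s a Jc unfolding saturated_def by blast
qed

context noetherian_cring
begin

context
  fixes T E' :: "'a set" and sq :: "nat \<Rightarrow> 'a set" and v :: "nat \<Rightarrow> 'a"
  assumes T: "primeideal T R" and E': "ideal E' R"
    and sq: "\<And>n. ideal (sq n) R" "\<And>n. saturated R T (sq n)" "\<And>n. E' \<subseteq> sq n"
      "\<And>n. sq (Suc n) \<subseteq> sq n"
    and v: "\<And>n. v n \<in> sq n" "\<And>n. v n \<notin> sq (Suc n)" "\<And>n. v n \<in> carrier R"
    and vT: "\<And>d n. d \<in> T \<Longrightarrow> d \<otimes> v n \<in> E'"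
begin

text \<open>The invariant showing \<open>v\<^sub>n \<notin> E' + (v\<^sub>0, \<dots>, v\<^sub>n\<^sub>-\<^sub>1)\<close>, so that these ideals increase
  strictly, contradicting the ascending chain condition.\<close>

definition avoids :: "'a set \<Rightarrow> nat \<Rightarrow> bool" where
  "avoids W n \<longleftrightarrow> (\<forall>w\<in>W. \<forall>c\<in>carrier R - T. \<forall>m\<ge>n. c \<otimes> v m \<oplus> w \<notin> sq (Suc m))"

lemma avoids_base: "avoids E' 0"
  unfolding avoids_def
proof (intro ballI allI impI notI)
  fix w c m assume w: "w \<in> E'" and c: "c \<in> carrier R - T" and H: "c \<otimes> v m \<oplus> w \<in> sq (Suc m)"
  have wc: "w \<in> carrier R" using w ideal.subset_carrier[OF E'] by blast
  have "c \<in> carrier R" "v m \<in> carrier R" using c v(3) by auto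
  hence "(c \<otimes> v m \<oplus> w) \<ominus> w = c \<otimes> v m" using wc by algebra
  moreover have "w \<in> sq (Suc m)" using w sq(3) by blast
  ultimately have "c \<otimes> v m \<in> sq (Suc m)" using ideal.minus_mem[OF sq(1) H] by metis
  hence "v m \<in> sq (Suc m)" using sq(2) c v(3) unfolding saturated_def by blast
  thus False using v(2) by blast
qed

lemma avoids_Suc:
  assumes W: "ideal W R" "E' \<subseteq> W" and inv: "avoids W n"
  shows "avoids (W <+>\<^bsub>R\<^esub> PIdl (v n)) (Suc n)"
  unfolding avoids_def
proof (intro ballI allI impI notI)
  fix w c m assume w: "w \<in> W <+>\<^bsub>R\<^esub> PIdl (v n)" and c: "c \<in> carrier R - T" and m: "Suc n \<le> m"
    and H: "c \<otimes> v m \<oplus> w \<in> sq (Suc m)"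
  obtain w' z where w': "w' \<in> W" "z \<in> PIdl (v n)" "w = w' \<oplus> z"
    using w unfolding mem_set_add_iff by blast
  obtain d where d: "d \<in> carrier R" "z = d \<otimes> v n" using w'(2) unfolding mem_cgenideal_iff by blast
  have w'c: "w' \<in> carrier R" using w'(1) ideal.subset_carrier[OF W(1)] by blast
  have cv: "c \<in> carrier R" "v m \<in> carrier R" "v n \<in> carrier R" using c v(3) by auto
  have sq_anti: "sq j \<subseteq> sq i" if "i \<le> j" for i j using lift_Suc_antimono_le[of sq, OF sq(4) that] .
  show False
  proof (cases "d \<in> T")
    case False
    have H1: "c \<otimes> v m \<oplus> (w' \<oplus> d \<otimes> v n) \<in> sq (Suc n)"
      using H sq_anti[of "Suc n" "Suc m"] m unfolding w'(3) d(2) by auto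
    have "v m \<in> sq (Suc n)" using v(1)[of m] sq_anti[OF m] by blast
    hence H2: "c \<otimes> v m \<in> sq (Suc n)" using ideal.I_l_closed[OF sq(1) _ cv(1)] by blast
    have "(c \<otimes> v m \<oplus> (w' \<oplus> d \<otimes> v n)) \<ominus> c \<otimes> v m = d \<otimes> v n \<oplus> w'"
      using cv d w'c by algebra
    hence "d \<otimes> v n \<oplus> w' \<in> sq (Suc n)" using ideal.minus_mem[OF sq(1) H1 H2] by simp
    moreover have "d \<in> carrier R - T" using d(1) False by simp
    ultimately show False using inv w'(1) unfolding avoids_def by blast
  next
    case True
    hence "z \<in> W" using d(2) vT W(2) by blast
    hence "w \<in> W" using w'(1,3) ideal.add_mem[OF W(1)] by simp
    moreover have "n \<le> m" using m by simp
    ultimately show False using inv c H unfolding avoids_def by blast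
  qed
qed

lemma witnessed_descending_chain_impossible: False
proof -
  define W where "W = rec_nat E' (\<lambda>n Wn. Wn <+>\<^bsub>R\<^esub> PIdl (v n))"
  have W_Suc: "W (Suc n) = W n <+>\<^bsub>R\<^esub> PIdl (v n)" for n unfolding W_def by simp
  have W: "ideal (W n) R \<and> E' \<subseteq> W n \<and> avoids (W n) n" for n
  proof (induction n)
    case 0 thus ?case using E' avoids_base unfolding W_def by simp
  next
    case (Suc n)
    hence IH: "ideal (W n) R" "E' \<subseteq> W n" "avoids (W n) n" by auto
    have "W n \<subseteq> W (Suc n)"
      unfolding W_Suc using set_add_subset_left[OF cgenideal_ideal[OF v(3)] ideal.subset_carrier[OF IH(1)]] .
    hence "E' \<subseteq> W (Suc n)" using IH(2) by (rule subset_trans[rotated])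
    moreover have "ideal (W (Suc n)) R" unfolding W_Suc using add_ideals[OF IH(1) cgenideal_ideal[OF v(3)]] .
    moreover have "avoids (W (Suc n)) (Suc n)" unfolding W_Suc using avoids_Suc[OF IH] .
    ultimately show ?case by simp
  qed
  have Wid: "ideal (W n) R" for n using W by simp
  have Wc: "W n \<subseteq> carrier R" for n using ideal.subset_carrier[OF Wid] .
  have v_notin: "v n \<notin> W n" for n
  proof
    assume "v n \<in> W n"
    hence "\<ominus> v n \<in> W n" using ideal.a_inv_mem[OF Wid] by blast
    moreover have "\<one> \<in> carrier R - T" using primeideal.one_notin[OF T] by simp
    moreover have "avoids (W n) n" using W by simp
    ultimately have "\<one> \<otimes> v n \<oplus> \<ominus> v n \<notin> sq (Suc n)"
      unfolding avoids_def by blast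
    moreover have "\<one> \<otimes> v n \<oplus> \<ominus> v n = \<zero>" using v(3) by algebra
    ultimately show False using ideal.zero_mem[OF sq(1)] by simp
  qed
  have v_in: "v n \<in> W (Suc n)" for n
    unfolding W_Suc
    using set_add_subset_right[OF Wid ideal.subset_carrier[OF cgenideal_ideal[OF v(3)]]] cgenideal_self[OF v(3)]
    by blast
  have "W n \<subseteq> W (Suc n)" for n
    unfolding W_Suc using set_add_subset_left[OF cgenideal_ideal[OF v(3)] Wc] .
  then obtain N where "W (Suc N) = W N"
    using ascending_ideal_sequence_stabilizes[of W, OF Wid] by blast
  thus False using v_notin[of N] v_in[of N] by simp
qed

end

end

context noetherian_cring begin

lemma saturation_fibre_has_minimal:
  assumes T: "primeideal T R" and P: "P \<subseteq> carrier R" and "F \<noteq> {}"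
    and F: "\<And>J. J \<in> F \<Longrightarrow> ideal J R \<and> saturated R T J \<and> pow_plus R T P (Suc k) \<subseteq> J"
    and L: "\<And>J. J \<in> F \<Longrightarrow> saturation R T (J <+>\<^bsub>R\<^esub> pow_plus R T P k) = L"
  shows "\<exists>M\<in>F. \<forall>X\<in>F. X \<subseteq> M \<longrightarrow> X = M"
proof (rule minimal_of_no_strict_descending[OF \<open>F \<noteq> {}\<close>])
  fix sq assume sq: "\<And>n. sq n \<in> F \<and> sq (Suc n) \<subset> sq n"
  have Tc: "T \<subseteq> carrier R" using ideal.subset_carrier[OF primeideal.axioms(1)[OF T]] .
  let ?E = "pow_plus R T P k"
  have E: "ideal ?E R" using pow_plus_ideal[OF Tc P] .
  have sqF: "ideal (sq n) R" "saturated R T (sq n)" "pow_plus R T P (Suc k) \<subseteq> sq n" for n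
    using F[OF conjunct1[OF sq[of n]]] by auto
  have "\<forall>n. \<exists>v. v \<in> sq n \<and> v \<in> ?E \<and> v \<notin> sq (Suc n)"
  proof (rule allI, rule ccontr)
    fix n assume "\<nexists>v. v \<in> sq n \<and> v \<in> ?E \<and> v \<notin> sq (Suc n)"
    hence "sq n \<inter> ?E \<subseteq> sq (Suc n)" by blast
    moreover have "saturation R T (sq n <+>\<^bsub>R\<^esub> ?E) = saturation R T (sq (Suc n) <+>\<^bsub>R\<^esub> ?E)"
      using L[OF conjunct1[OF sq[of n]]] L[OF conjunct1[OF sq[of "Suc n"]]] by simp
    moreover have "sq (Suc n) \<subseteq> sq n" using sq[of n] by blast
    ultimately have "sq n \<subseteq> sq (Suc n)"
      using subset_of_saturation_set_add[OF T E sqF(1) sqF(1) _ sqF(2)] by blast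
    thus False using sq[of n] by blast
  qed
  then obtain v where "\<forall>n. v n \<in> sq n \<and> v n \<in> ?E \<and> v n \<notin> sq (Suc n)"
    by (auto dest: choice)
  hence v: "\<And>n. v n \<in> sq n" "\<And>n. v n \<in> ?E" "\<And>n. v n \<notin> sq (Suc n)" by auto
  show False
  proof (rule witnessed_descending_chain_impossible[OF T pow_plus_ideal[OF Tc P] sqF])
    show "sq (Suc n) \<subseteq> sq n" "v n \<in> sq n" "v n \<notin> sq (Suc n)" for n using sq v by auto
    show "v n \<in> carrier R" for n using v(2) ideal.subset_carrier[OF E] by blast
    show "d \<otimes> v n \<in> pow_plus R T P (Suc k)" if "d \<in> T" for d n
      using mult_mem_pow_plus[OF Tc P that v(2)] .
  qed
qed

text \<open>Artinian property of \<open>R\<^sub>T / (P + T\<^sup>k)\<close>, by induction on \<open>k\<close>: each fibre of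
  \<open>J \<mapsto> (J + (P + T\<^sup>k))\<^sub>T\<close> has a minimal element.\<close>

lemma saturated_over_pow_plus_has_minimal:
  assumes T: "primeideal T R" and P: "P \<subseteq> carrier R" and "F \<noteq> {}"
    and "\<And>J. J \<in> F \<Longrightarrow> ideal J R \<and> saturated R T J \<and> pow_plus R T P k \<subseteq> J"
  shows "\<exists>M\<in>F. \<forall>X\<in>F. X \<subseteq> M \<longrightarrow> X = M"
  using assms(3,4)
proof (induction k arbitrary: F)
  case 0
  hence "X = carrier R" if "X \<in> F" for X using ideal.subset_carrier that by auto
  thus ?case using 0(1) by blast
next
  case (Suc k F)
  have Tc: "T \<subseteq> carrier R" using ideal.subset_carrier[OF primeideal.axioms(1)[OF T]] .
  let ?E = "pow_plus R T P k"
  have E: "ideal ?E R" using pow_plus_ideal[OF Tc P] .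
  let ?sat = "\<lambda>J. saturation R T (J <+>\<^bsub>R\<^esub> ?E)"
  have "ideal (?sat J) R \<and> saturated R T (?sat J) \<and> ?E \<subseteq> ?sat J" if "J \<in> F" for J
  proof -
    have JE: "ideal (J <+>\<^bsub>R\<^esub> ?E) R" using add_ideals[OF _ E] Suc.prems(2)[OF that] by blast
    have "?E \<subseteq> J <+>\<^bsub>R\<^esub> ?E"
      using set_add_subset_right[OF _ ideal.subset_carrier[OF E]] Suc.prems(2)[OF that] by blast
    thus ?thesis using saturation_ideal[OF T JE] saturated_saturation[OF T]
        subset_saturation[OF T ideal.subset_carrier[OF JE]] by blast
  qed
  then obtain L where L: "L \<in> ?sat ` F" and Lmin: "\<forall>X\<in>?sat ` F. X \<subseteq> L \<longrightarrow> X = L"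
    using Suc.IH[of "?sat ` F"] Suc.prems(1) by blast
  let ?F' = "{J\<in>F. ?sat J = L}"
  obtain M where M: "M \<in> ?F'" and Mmin: "\<forall>X\<in>?F'. X \<subseteq> M \<longrightarrow> X = M"
    using saturation_fibre_has_minimal[OF T P, of ?F' k L] L Suc.prems(2) by blast
  have "X = M" if "X \<in> F" "X \<subseteq> M" for X
  proof -
    have "?sat X \<subseteq> ?sat M" using saturation_mono[OF set_add_mono_left[OF that(2)]] .
    hence "?sat X \<subseteq> L" using M by simp
    hence "?sat X = L" using Lmin that(1) by blast
    thus ?thesis using Mmin that by blast
  qed
  thus ?case using M by blast
qed

end

section \<open>Nakayama's lemma\<close>

context cring begin

lemma multiples_ideal:
  assumes "ideal p R" "g \<in> carrier R"
  shows "ideal {c \<otimes> g | c. c \<in> p} R"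
proof (rule ideal_closedI)
  interpret p: ideal p R by fact
  show "{c \<otimes> g | c. c \<in> p} \<subseteq> carrier R" using p.subset_carrier assms(2) by auto
  show "\<zero> \<in> {c \<otimes> g | c. c \<in> p}" using p.zero_mem assms(2) by (auto intro!: exI[of _ \<zero>])
  fix a b r assume "a \<in> {c \<otimes> g | c. c \<in> p}"
  then obtain c where c: "c \<in> p" "a = c \<otimes> g" by blast
  have cc: "c \<in> carrier R" using c(1) p.subset_carrier by blast
  { assume "b \<in> {c \<otimes> g | c. c \<in> p}"
    then obtain d where d: "d \<in> p" "b = d \<otimes> g" by blast
    have "a \<oplus> b = (c \<oplus> d) \<otimes> g" using c d cc p.subset_carrier assms(2) by (simp add: l_distr subsetD)
    thus "a \<oplus> b \<in> {c \<otimes> g | c. c \<in> p}" using p.add_mem[OF c(1) d(1)] by blast }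
  assume "r \<in> carrier R"
  hence "r \<otimes> a = (r \<otimes> c) \<otimes> g" using c cc assms(2) by (simp add: m_assoc)
  thus "r \<otimes> a \<in> {c \<otimes> g | c. c \<in> p}" using p.I_l_closed[OF c(1) \<open>r \<in> carrier R\<close>] by blast
qed

text \<open>The one-generator case of Nakayama's lemma over \<open>R\<^sub>p\<close>: if \<open>s g = k + c g\<close>
  then \<open>(s - c) g \<in> K\<close> with \<open>s - c\<close> a unit at \<open>p\<close>.\<close>

lemma mem_saturation_cancel:
  assumes p: "primeideal p R" and K: "ideal K R" and g: "g \<in> carrier R"
    and "g \<in> saturation R p (K <+>\<^bsub>R\<^esub> {c \<otimes> g | c. c \<in> p})"
  shows "g \<in> saturation R p K"
proof -
  interpret p: primeideal p R by fact
  obtain s k c where s: "s \<in> carrier R" "s \<notin> p" and k: "k \<in> K" and c: "c \<in> p"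
    and eq: "s \<otimes> g = k \<oplus> c \<otimes> g"
    using assms(4) unfolding saturation_def mem_set_add_iff by blast
  have cc: "c \<in> carrier R" and kc: "k \<in> carrier R"
    using c k p.subset_carrier ideal.subset_carrier[OF K] by auto
  have "(s \<ominus> c) \<otimes> g = s \<otimes> g \<ominus> c \<otimes> g" using s cc g by algebra
  also have "\<dots> = (k \<oplus> c \<otimes> g) \<ominus> c \<otimes> g" using eq by simp
  also have "\<dots> = k" using kc cc g by algebra
  finally have "(s \<ominus> c) \<otimes> g \<in> K" using k by simp
  moreover have "s \<ominus> c \<notin> p"
  proof
    assume "s \<ominus> c \<in> p"
    hence "(s \<ominus> c) \<oplus> c \<in> p" using p.add_mem c by blast
    moreover have "(s \<ominus> c) \<oplus> c = s" using s cc by algebra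
    ultimately show False using s(2) by simp
  qed
  moreover have "s \<ominus> c \<in> carrier R" using s cc by simp
  ultimately show ?thesis unfolding saturation_def using g by blast
qed

lemma genideal_prime_multiples_subset:
  assumes p: "primeideal p R" and K: "ideal K R" and g: "g \<in> carrier R"
    and M: "M \<subseteq> saturation R p (K <+>\<^bsub>R\<^esub> PIdl g)"
  shows "Idl {y \<otimes> m | y m. y \<in> p \<and> m \<in> M} \<subseteq> saturation R p (K <+>\<^bsub>R\<^esub> {c \<otimes> g | c. c \<in> p})"
proof (rule genideal_minimal[OF saturation_ideal[OF p add_ideals[OF K multiples_ideal[OF primeideal.axioms(1)[OF p] g]]]])
  interpret p: primeideal p R by fact
  show "{y \<otimes> m | y m. y \<in> p \<and> m \<in> M} \<subseteq> saturation R p (K <+>\<^bsub>R\<^esub> {c \<otimes> g | c. c \<in> p})"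
  proof
    fix z assume "z \<in> {y \<otimes> m | y m. y \<in> p \<and> m \<in> M}"
    then obtain y m where y: "y \<in> p" and m: "m \<in> M" and z: "z = y \<otimes> m" by blast
    obtain S where S: "S \<in> carrier R" "S \<notin> p" "S \<otimes> m \<in> K <+>\<^bsub>R\<^esub> PIdl g" and mc: "m \<in> carrier R"
      using M m unfolding saturation_def by blast
    then obtain k w where k: "k \<in> K" and w: "w \<in> PIdl g" and kw: "S \<otimes> m = k \<oplus> w"
      unfolding mem_set_add_iff by blast
    then obtain r where r: "r \<in> carrier R" and m_eq: "S \<otimes> m = k \<oplus> r \<otimes> g"
      unfolding mem_cgenideal_iff by blast
    have yc: "y \<in> carrier R" and kc: "k \<in> carrier R"
      using y k p.subset_carrier ideal.subset_carrier[OF K] by auto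
    have "S \<otimes> z = y \<otimes> (S \<otimes> m)" using z S yc mc by algebra
    also have "\<dots> = y \<otimes> k \<oplus> (y \<otimes> r) \<otimes> g" using m_eq yc kc r g by algebra
    finally have "S \<otimes> z \<in> K <+>\<^bsub>R\<^esub> {c \<otimes> g | c. c \<in> p}"
      unfolding mem_set_add_iff using ideal.I_l_closed[OF K k yc] p.I_r_closed[OF y r] by blast
    moreover have "z \<in> carrier R" using z yc mc by simp
    ultimately show "z \<in> saturation R p (K <+>\<^bsub>R\<^esub> {c \<otimes> g | c. c \<in> p})"
      unfolding saturation_def using S by blast
  qed
qed

lemma saturation_nakayama_step:
  assumes p: "primeideal p R" and K: "ideal K R" and M: "M \<subseteq> carrier R" "g \<in> M"
    and MK: "M \<subseteq> saturation R p (K <+>\<^bsub>R\<^esub> PIdl g)"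
    and hyp: "M \<subseteq> saturation R p (K <+>\<^bsub>R\<^esub> Idl {y \<otimes> m | y m. y \<in> p \<and> m \<in> M})"
  shows "M \<subseteq> saturation R p K"
proof -
  let ?pM = "Idl {y \<otimes> m | y m. y \<in> p \<and> m \<in> M}"
  let ?S = "saturation R p (K <+>\<^bsub>R\<^esub> {c \<otimes> g | c. c \<in> p})"
  have Kc: "K \<subseteq> carrier R" using ideal.subset_carrier[OF K] .
  have g: "g \<in> carrier R" using M by blast
  have pg: "ideal {c \<otimes> g | c. c \<in> p} R" using multiples_ideal[OF primeideal.axioms(1)[OF p] g] .
  have Kp: "ideal (K <+>\<^bsub>R\<^esub> {c \<otimes> g | c. c \<in> p}) R" using add_ideals[OF K pg] .
  have "{y \<otimes> m | y m. y \<in> p \<and> m \<in> M} \<subseteq> carrier R"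
    using M(1) ideal.subset_carrier[OF primeideal.axioms(1)[OF p]] by blast
  hence "K <+>\<^bsub>R\<^esub> ?pM = Idl (K \<union> ?pM)" using union_genideal[OF K genideal_ideal] by simp
  moreover have "K \<subseteq> ?S"
    using set_add_subset_left[OF pg Kc] subset_saturation[OF p ideal.subset_carrier[OF Kp]] by blast
  moreover have "?pM \<subseteq> ?S" using genideal_prime_multiples_subset[OF p K g MK] .
  ultimately have "K <+>\<^bsub>R\<^esub> ?pM \<subseteq> ?S" using genideal_minimal[OF saturation_ideal[OF p Kp]] by simp
  hence "saturation R p (K <+>\<^bsub>R\<^esub> ?pM) \<subseteq> ?S" using saturation_least[OF p] by blast
  hence "g \<in> saturation R p K" using mem_saturation_cancel[OF p K g] M(2) hyp by blast
  hence "K <+>\<^bsub>R\<^esub> PIdl g \<subseteq> saturation R p K"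
    using genideal_insert[OF K g] genideal_minimal[OF saturation_ideal[OF p K]] subset_saturation[OF p Kc]
    by (metis insert_subset)
  thus ?thesis using MK saturation_least[OF p] by blast
qed

text \<open>Nakayama's lemma over \<open>R\<^sub>p\<close>, for \<open>M\<close> finitely generated over \<open>K\<close>:
  \<open>M\<^sub>p \<subseteq> (K + p M)\<^sub>p\<close> implies \<open>M\<^sub>p \<subseteq> K\<^sub>p\<close>.\<close>

lemma saturation_nakayama:
  assumes p: "primeideal p R" and "finite A"
  shows "A \<subseteq> carrier R \<Longrightarrow> ideal K R \<Longrightarrow> M = Idl (K \<union> A)
    \<Longrightarrow> M \<subseteq> saturation R p (K <+>\<^bsub>R\<^esub> Idl {y \<otimes> m | y m. y \<in> p \<and> m \<in> M})
    \<Longrightarrow> M \<subseteq> saturation R p K"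
  using \<open>finite A\<close>
proof (induction A arbitrary: K)
  case empty
  thus ?case using genideal_of_ideal[of K] subset_saturation[OF p ideal.subset_carrier[of K]] by simp
next
  case (insert g A K)
  have g: "g \<in> carrier R" and A: "A \<subseteq> carrier R" and K: "ideal K R" using insert.prems by auto
  have Kc: "K \<subseteq> carrier R" using ideal.subset_carrier[OF K] .
  have KgA: "K \<union> insert g A \<subseteq> carrier R" using insert.prems(1) Kc by blast
  define K' where "K' = Idl (insert g K)"
  have K': "ideal K' R" "K \<subseteq> K'" "K' = K <+>\<^bsub>R\<^esub> PIdl g"
    unfolding K'_def using genideal_ideal[of "insert g K"] genideal_self[of "insert g K"] Kc g
      genideal_insert[OF K g] by auto
  have "M = Idl (K' \<union> A)"
    unfolding insert.prems(3) K'_def using genideal_Un_genideal[of "insert g K" A] Kc g A by simp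
  moreover have "M \<subseteq> saturation R p (K' <+>\<^bsub>R\<^esub> Idl {y \<otimes> m | y m. y \<in> p \<and> m \<in> M})"
    using insert.prems(4) saturation_mono[OF set_add_mono_left[OF K'(2)]] by blast
  ultimately have "M \<subseteq> saturation R p K'" using insert.IH[OF A K'(1)] by blast
  moreover have "M \<subseteq> carrier R" "g \<in> M"
    using ideal.subset_carrier[OF genideal_ideal[OF KgA]] genideal_self[OF KgA] insert.prems(3) by auto
  ultimately show ?case using saturation_nakayama_step[OF p K _ _ _ insert.prems(4)] K'(3) by simp
qed

end

context noetherian_cring begin

lemma exists_finite_generators_over:
  assumes "ideal I R" "K \<subseteq> I"
  shows "\<exists>A. A \<subseteq> carrier R \<and> finite A \<and> I = Idl (K \<union> A)"
proof -
  obtain A where A: "A \<subseteq> carrier R" "finite A" "I = Idl A" using finetely_gen[OF assms(1)] by blast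
  thus ?thesis using genideal_Un_absorb[OF A(1)] assms(2) by blast
qed

lemma pow_plus_subset_prime:
  assumes P: "primeideal P R" and p: "primeideal p R" "P \<subseteq> p"
    and stable: "pow_plus R p P n \<subseteq> saturation R p (pow_plus R p P (Suc n))"
  shows "pow_plus R p P n \<subseteq> P"
proof -
  have pc: "p \<subseteq> carrier R" using ideal.subset_carrier[OF primeideal.axioms(1)[OF p(1)]] .
  have Pid: "ideal P R" using primeideal.axioms(1)[OF P] .
  have Pc: "P \<subseteq> carrier R" using ideal.subset_carrier[OF Pid] .
  let ?D = "pow_plus R p P n"
  let ?G = "{y \<otimes> m | y m. y \<in> p \<and> m \<in> ?D}"
  have Gc: "?G \<subseteq> carrier R" using pc ideal.subset_carrier[OF pow_plus_ideal[OF pc Pc]] by blast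
  have "P \<union> ?G \<subseteq> P <+>\<^bsub>R\<^esub> Idl ?G"
    using set_add_subset_left[OF genideal_ideal[OF Gc] Pc] set_add_subset_right[OF Pid] genideal_self[OF Gc]
      ideal.subset_carrier[OF genideal_ideal[OF Gc]] by blast
  hence "pow_plus R p P (Suc n) \<subseteq> P <+>\<^bsub>R\<^esub> Idl ?G"
    using genideal_minimal[OF add_ideals[OF Pid genideal_ideal[OF Gc]]] by simp
  hence "?D \<subseteq> saturation R p (P <+>\<^bsub>R\<^esub> Idl ?G)" using stable saturation_mono by blast
  moreover obtain A where "A \<subseteq> carrier R" "finite A" "?D = Idl (P \<union> A)"
    using exists_finite_generators_over[OF pow_plus_ideal[OF pc Pc] subset_pow_plus[OF pc Pc]] by blast
  ultimately have "?D \<subseteq> saturation R p P" using saturation_nakayama[OF p(1)] Pid by blast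
  thus ?thesis using saturation_subset[OF primeideal_saturated[OF P p(2)] Pc] by blast
qed

text \<open>If \<open>s a = b + r x\<close> with \<open>b \<in> I' \<subseteq> I\<close>, then \<open>x r \<in> I\<close>, so \<open>r \<in> I\<close> as \<open>x \<notin> p\<close>
  and \<open>I\<close> is \<open>p\<close>-saturated; thus \<open>r x \<in> T I\<close>.\<close>

lemma subset_saturation_add_prime_multiples:
  assumes T: "primeideal T R" and x: "x \<in> T" "x \<notin> p"
    and I: "ideal I R" "saturated R p I" and I': "ideal I' R" "I' \<subseteq> I"
    and eq: "saturation R T (I <+>\<^bsub>R\<^esub> PIdl x) \<subseteq> saturation R T (I' <+>\<^bsub>R\<^esub> PIdl x)"
  shows "I \<subseteq> saturation R T (I' <+>\<^bsub>R\<^esub> Idl {y \<otimes> m | y m. y \<in> T \<and> m \<in> I})"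
proof
  let ?G = "{y \<otimes> m | y m. y \<in> T \<and> m \<in> I}"
  have Ic: "I \<subseteq> carrier R" using ideal.subset_carrier[OF I(1)] .
  have Tc: "T \<subseteq> carrier R" using ideal.subset_carrier[OF primeideal.axioms(1)[OF T]] .
  have xc: "x \<in> carrier R" using x(1) Tc by blast
  have Gc: "?G \<subseteq> carrier R" using Tc Ic by blast
  fix a assume a: "a \<in> I"
  have "a \<in> saturation R T (I <+>\<^bsub>R\<^esub> PIdl x)"
    using a set_add_subset_left[OF cgenideal_ideal[OF xc] Ic]
      subset_saturation[OF T ideal.subset_carrier[OF add_ideals[OF I(1) cgenideal_ideal[OF xc]]]]
    by blast
  then obtain s where s: "s \<in> carrier R" "s \<notin> T" "s \<otimes> a \<in> I' <+>\<^bsub>R\<^esub> PIdl x"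
    using eq unfolding saturation_def by blast
  then obtain b w where b: "b \<in> I'" and w: "w \<in> PIdl x" and sa: "s \<otimes> a = b \<oplus> w"
    unfolding mem_set_add_iff by blast
  then obtain r where r: "r \<in> carrier R" and w_eq: "w = r \<otimes> x" unfolding mem_cgenideal_iff by blast
  have bc: "b \<in> carrier R" using b ideal.subset_carrier[OF I'(1)] by blast
  have ac: "a \<in> carrier R" using a Ic by blast
  have "x \<otimes> r = (b \<oplus> r \<otimes> x) \<ominus> b" using bc r xc by algebra
  also have "\<dots> = s \<otimes> a \<ominus> b" using sa w_eq by simp
  also have "\<dots> \<in> I" using ideal.minus_mem[OF I(1) ideal.I_l_closed[OF I(1) a s(1)]] b I'(2) by blast
  finally have "r \<in> I" using I(2) xc x(2) r unfolding saturated_def by blast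
  hence "x \<otimes> r \<in> ?G" using x(1) by blast
  hence "r \<otimes> x \<in> Idl ?G" using genideal_self[OF Gc] m_comm[OF r xc] by auto
  hence "s \<otimes> a \<in> I' <+>\<^bsub>R\<^esub> Idl ?G" unfolding mem_set_add_iff using sa w_eq b by blast
  thus "a \<in> saturation R T (I' <+>\<^bsub>R\<^esub> Idl ?G)" unfolding saturation_def using s(1,2) ac by blast
qed

lemma saturation_add_principal_cancel:
  assumes T: "primeideal T R" and x: "x \<in> T" "x \<notin> p"
    and I: "ideal I R" "saturated R p I" and I': "ideal I' R" "I' \<subseteq> I"
    and eq: "saturation R T (I <+>\<^bsub>R\<^esub> PIdl x) \<subseteq> saturation R T (I' <+>\<^bsub>R\<^esub> PIdl x)"
  shows "I \<subseteq> saturation R T I'"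
proof -
  obtain A where "A \<subseteq> carrier R" "finite A" "I = Idl (I' \<union> A)"
    using exists_finite_generators_over[OF I(1) I'(2)] by blast
  thus ?thesis
    using saturation_nakayama[OF T] I'(1) subset_saturation_add_prime_multiples[OF assms] by blast
qed

end

text \<open>The \<open>n\<close>-th symbolic power of \<open>p\<close> modulo \<open>P\<close>, i.e. the contraction of \<open>(P + p\<^sup>n) R\<^sub>p\<close>.\<close>

definition symbolic_power :: "('a, 'b) ring_scheme \<Rightarrow> 'a set \<Rightarrow> 'a set \<Rightarrow> nat \<Rightarrow> 'a set" where
  "symbolic_power R p P n = saturation R p (pow_plus R p P n)"

context noetherian_cring begin

lemma saturated_descending_chain_stabilizes:
  assumes T: "primeideal T R" and B: "ideal B R" "B \<subseteq> T"
    and Tmin: "\<And>Q. primeideal Q R \<Longrightarrow> B \<subseteq> Q \<Longrightarrow> Q \<subseteq> T \<Longrightarrow> Q = T"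
    and Y: "\<And>n. ideal (Y n) R" "\<And>n. saturated R T (Y n)" "\<And>n. B \<subseteq> Y n" "\<And>n. Y (Suc n) \<subseteq> Y n"
  shows "\<exists>n. Y (Suc n) = Y n"
proof -
  obtain k where k: "pow_plus R T B k \<subseteq> saturation R T B"
    using pow_plus_subset_saturation[OF T B Tmin] by blast
  have "saturation R T B \<subseteq> Y n" for n
    using saturation_mono[OF Y(3)[of n]] saturation_subset[OF Y(2) ideal.subset_carrier[OF Y(1)]] by blast
  hence props: "ideal J R \<and> saturated R T J \<and> pow_plus R T B k \<subseteq> J" if "J \<in> range Y" for J
    using that Y(1,2) k by blast
  have "\<exists>M\<in>range Y. \<forall>X\<in>range Y. X \<subseteq> M \<longrightarrow> X = M"
    by (rule saturated_over_pow_plus_has_minimal[OF T ideal.subset_carrier[OF B(1)]]) (use props in auto)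
  then obtain M where "M \<in> range Y" and Mmin: "\<forall>X\<in>range Y. X \<subseteq> M \<longrightarrow> X = M" ..
  then obtain n where n: "Y n = M" by blast
  have "Y (Suc n) = Y n" using Mmin[rule_format, OF rangeI] Y(4)[of n] n by blast
  thus ?thesis ..
qed

lemma symbolic_power_stabilizes:
  assumes T: "primeideal T R" and x: "x \<in> T" "x \<notin> p"
    and P: "ideal P R" "P \<subseteq> T"
    and Tmin: "\<And>Q. primeideal Q R \<Longrightarrow> P \<subseteq> Q \<Longrightarrow> x \<in> Q \<Longrightarrow> Q \<subseteq> T \<Longrightarrow> Q = T"
    and p: "primeideal p R" "P \<subseteq> p" "p \<subseteq> T"
  shows "\<exists>n. symbolic_power R p P n \<subseteq> symbolic_power R p P (Suc n)"
proof -
  have pc: "p \<subseteq> carrier R" using ideal.subset_carrier[OF primeideal.axioms(1)[OF p(1)]] .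
  have Pc: "P \<subseteq> carrier R" using ideal.subset_carrier[OF P(1)] .
  have xc: "x \<in> carrier R" using x(1) ideal.subset_carrier[OF primeideal.axioms(1)[OF T]] by blast
  let ?B = "Idl (insert x P)"
  have xP: "insert x P \<subseteq> carrier R" using Pc xc by simp
  have B: "ideal ?B R" "?B \<subseteq> T" "insert x P \<subseteq> ?B"
    using genideal_ideal[OF xP] genideal_self[OF xP] genideal_minimal[OF primeideal.axioms(1)[OF T]]
      x(1) P(2) by auto
  have Bmin: "Q = T" if "primeideal Q R" "?B \<subseteq> Q" "Q \<subseteq> T" for Q using Tmin that B(3) by blast
  let ?S = "symbolic_power R p P"
  have S: "ideal (?S n) R" "saturated R p (?S n)" "P \<subseteq> ?S n" "?S (Suc n) \<subseteq> ?S n" for n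
    unfolding symbolic_power_def
    using saturation_ideal[OF p(1) pow_plus_ideal[OF pc Pc]] saturated_saturation[OF p(1)]
      subset_pow_plus[OF pc Pc] subset_saturation[OF p(1) ideal.subset_carrier[OF pow_plus_ideal[OF pc Pc]]]
      saturation_mono[OF pow_plus_Suc_subset[OF pc Pc]] by blast+
  let ?Y = "\<lambda>n. saturation R T (?S n <+>\<^bsub>R\<^esub> PIdl x)"
  have SX: "ideal (?S n <+>\<^bsub>R\<^esub> PIdl x) R" for n using add_ideals[OF S(1) cgenideal_ideal[OF xc]] .
  have "?B \<subseteq> ?Y n" for n
  proof -
    have "insert x P \<subseteq> ?S n <+>\<^bsub>R\<^esub> PIdl x"
      using set_add_subset_right[OF S(1) ideal.subset_carrier[OF cgenideal_ideal[OF xc]]]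
        cgenideal_self[OF xc] set_add_subset_left[OF cgenideal_ideal[OF xc] ideal.subset_carrier[OF S(1)]]
        S(3) by blast
    hence "?B \<subseteq> ?S n <+>\<^bsub>R\<^esub> PIdl x" using genideal_minimal[OF SX] by simp
    thus ?thesis using subset_saturation[OF T ideal.subset_carrier[OF SX]] by blast
  qed
  moreover have "ideal (?Y n) R" for n by (rule saturation_ideal[OF T SX])
  moreover have "saturated R T (?Y n)" for n by (rule saturated_saturation[OF T])
  moreover have "?Y (Suc n) \<subseteq> ?Y n" for n by (rule saturation_mono[OF set_add_mono_left[OF S(4)]])
  ultimately obtain n where "?Y (Suc n) = ?Y n"
    using saturated_descending_chain_stabilizes[OF T B(1,2) Bmin, of ?Y] by blast
  hence "?S n \<subseteq> saturation R T (?S (Suc n))"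
    by (intro saturation_add_principal_cancel[OF T x S(1,2) S(1) S(4)]) simp
  also have "\<dots> \<subseteq> ?S (Suc n)"
    using saturation_subset[OF saturated_subset_prime[OF S(2) p(3)] ideal.subset_carrier[OF S(1)]] .
  finally show ?thesis by blast
qed

text \<open>Krull's principal ideal theorem, relative to a prime \<open>P\<close>: a prime \<open>T\<close> minimal over
  \<open>P + (x)\<close> has height at most one over \<open>P\<close>.\<close>

theorem principal_ideal_theorem:
  assumes P: "primeideal P R" and T: "primeideal T R" "P \<subseteq> T" and x: "x \<in> T"
    and Tmin: "\<And>Q. primeideal Q R \<Longrightarrow> P \<subseteq> Q \<Longrightarrow> x \<in> Q \<Longrightarrow> Q \<subseteq> T \<Longrightarrow> Q = T"
    and p: "primeideal p R" "P \<subseteq> p" "p \<subseteq> T"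
  shows "p = P \<or> p = T"
proof (rule ccontr)
  assume "\<not> (p = P \<or> p = T)"
  hence "x \<notin> p" using Tmin[OF p(1,2) _ p(3)] by blast
  then obtain n where n: "symbolic_power R p P n \<subseteq> symbolic_power R p P (Suc n)"
    using symbolic_power_stabilizes[OF T(1) x _ primeideal.axioms(1)[OF P] T(2) Tmin p] by blast
  have pc: "p \<subseteq> carrier R" using ideal.subset_carrier[OF primeideal.axioms(1)[OF p(1)]] .
  have Pc: "P \<subseteq> carrier R" using ideal.subset_carrier[OF primeideal.axioms(1)[OF P]] .
  have "pow_plus R p P n \<subseteq> saturation R p (pow_plus R p P (Suc n))"
    using n subset_saturation[OF p(1) ideal.subset_carrier[OF pow_plus_ideal[OF pc Pc]]]
    unfolding symbolic_power_def by blast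
  hence "pow_plus R p P n \<subseteq> P" using pow_plus_subset_prime[OF P p(1,2)] by blast
  moreover obtain y where y: "y \<in> p" "y \<notin> P" using p(2) \<open>\<not> (p = P \<or> p = T)\<close> by blast
  ultimately have "y [^] n \<in> P" using pow_mem_pow_plus[OF pc Pc] by blast
  thus False using primeideal_pow_mem[OF P] y pc by blast
qed

lemma exists_covering_prime:
  assumes P: "primeideal P R" and Q: "primeideal Q R" and "P \<subset> Q"
  shows "\<exists>T. primeideal T R \<and> P \<subset> T \<and> T \<subseteq> Q \<and>
     (\<forall>p. primeideal p R \<and> P \<subseteq> p \<and> p \<subseteq> T \<longrightarrow> p = P \<or> p = T)"
proof -
  obtain x where x: "x \<in> Q" "x \<notin> P" using \<open>P \<subset> Q\<close> by blast
  have Pc: "P \<subseteq> carrier R" using ideal.subset_carrier[OF primeideal.axioms(1)[OF P]] .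
  have s: "insert x P \<subseteq> carrier R"
    using Pc x(1) ideal.subset_carrier[OF primeideal.axioms(1)[OF Q]] by blast
  have "Idl (insert x P) \<subseteq> Q"
    using genideal_minimal[OF primeideal.axioms(1)[OF Q]] x(1) \<open>P \<subset> Q\<close> by simp
  then obtain T where T: "primeideal T R" "Idl (insert x P) \<subseteq> T" "T \<subseteq> Q"
    and Tm: "\<forall>T'. primeideal T' R \<and> Idl (insert x P) \<subseteq> T' \<and> T' \<subseteq> T \<longrightarrow> T' = T"
    using minimal_prime_between[OF genideal_ideal[OF s] Q] by blast
  have PT: "P \<subseteq> T" and xT: "x \<in> T" using genideal_self[OF s] T(2) by auto
  have "Q' = T" if "primeideal Q' R" "P \<subseteq> Q'" "x \<in> Q'" "Q' \<subseteq> T" for Q'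
    using Tm that genideal_minimal[OF primeideal.axioms(1)[OF that(1)]] by simp
  hence "p = P \<or> p = T" if "primeideal p R" "P \<subseteq> p" "p \<subseteq> T" for p
    using principal_ideal_theorem[OF P T(1) PT xT _ that] by blast
  thus ?thesis using T(1,3) PT xT x(2) by blast
qed

end

lemma mem_Spec_iff: "P \<in> Spec R \<longleftrightarrow> primeideal P R"
  unfolding Spec_def by simp

lemma specialization_closedD:
  assumes "specialization_closed R S" "P \<in> S"
  shows "primeideal P R" and "primeideal Q R \<Longrightarrow> P \<subseteq> Q \<Longrightarrow> Q \<in> S"
proof -
  have "S \<subseteq> Spec R" and up: "\<And>P Q. P \<in> S \<Longrightarrow> Q \<in> Spec R \<Longrightarrow> P \<subseteq> Q \<Longrightarrow> Q \<in> S"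
    using assms(1) unfolding specialization_closed_def by blast+
  thus "primeideal P R" using assms(2) mem_Spec_iff by blast
  show "primeideal Q R \<Longrightarrow> P \<subseteq> Q \<Longrightarrow> Q \<in> S" using up[OF assms(2)] mem_Spec_iff by blast
qed

lemma specialization_closed_UN:
  assumes "\<And>i. specialization_closed R (S i)"
  shows "specialization_closed R (\<Union>i. S i)"
  using assms unfolding specialization_closed_def by (simp add: UN_subset_iff) blast

lemma specialization_closed_INT:
  assumes "\<And>i. specialization_closed R (S i)"
  shows "specialization_closed R (\<Inter>i. S i)"
  using assms unfolding specialization_closed_def
  by (simp add: INT_subset_iff) (meson INT_lower UNIV_I subset_trans)

lemma (in cring) prime_avoidance_mult:
  assumes "finite G" and Q: "primeideal Q R" and G: "\<forall>f\<in>G. ideal f R \<and> \<not> f \<subseteq> Q"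
  shows "\<exists>b\<in>carrier R - Q. \<forall>f\<in>G. b \<in> f"
  using assms(1) G
proof (induction G)
  case empty thus ?case using primeideal.one_notin[OF Q] by (intro bexI[of _ \<one>]) auto
next
  case (insert f G)
  obtain b where b: "b \<in> carrier R" "b \<notin> Q" "\<forall>g\<in>G. b \<in> g" using insert.IH insert.prems by blast
  have f: "ideal f R" "\<not> f \<subseteq> Q" using insert.prems by auto
  then obtain a where a: "a \<in> f" "a \<notin> Q" by blast
  have ac: "a \<in> carrier R" using a(1) ideal.subset_carrier[OF f(1)] by blast
  have "a \<otimes> b \<notin> Q" using primeideal.I_prime[OF Q ac b(1)] a(2) b(2) by blast
  moreover have "a \<otimes> b \<in> f" using ideal.I_r_closed[OF f(1) a(1) b(1)] .
  moreover have "a \<otimes> b \<in> g" if "g \<in> G" for g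
    using ideal.I_l_closed[of g R b a] b(3) that ac insert.prems by blast
  ultimately show ?case using ac b(1) by (intro bexI[of _ "a \<otimes> b"]) auto
qed

lemma (in cring) zariski_closed_finite_union:
  assumes "finite G" "\<forall>f\<in>G. primeideal f R"
  shows "zariski_closed R {Q \<in> Spec R. \<exists>f\<in>G. f \<subseteq> Q}"
proof -
  have "{Q \<in> Spec R. \<exists>f\<in>G. f \<subseteq> Q} = {Q \<in> Spec R. carrier R \<inter> \<Inter>G \<subseteq> Q}"
  proof (intro Collect_cong conj_cong refl iffI)
    fix Q assume Q: "Q \<in> Spec R" and sub: "carrier R \<inter> \<Inter>G \<subseteq> Q"
    show "\<exists>f\<in>G. f \<subseteq> Q"
    proof (rule ccontr)
      assume "\<not> (\<exists>f\<in>G. f \<subseteq> Q)"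
      hence "\<forall>f\<in>G. ideal f R \<and> \<not> f \<subseteq> Q" using assms(2) primeideal.axioms(1) by blast
      then obtain b where "b \<in> carrier R - Q" "\<forall>f\<in>G. b \<in> f"
        using prime_avoidance_mult[OF assms(1)] Q unfolding mem_Spec_iff by blast
      thus False using sub by blast
    qed
  qed blast
  thus ?thesis unfolding zariski_closed_def by (intro exI[of _ "carrier R \<inter> \<Inter>G"]) simp
qed

context noetherian_cring begin

lemma zariski_clopen_if_stable:
  assumes S: "specialization_closed R S"
    and gen: "\<And>P Q. Q \<in> S \<Longrightarrow> primeideal P R \<Longrightarrow> P \<subseteq> Q \<Longrightarrow> P \<in> S"
  shows "zariski_closed R S \<and> zariski_open R S"
proof -
  obtain F where F: "finite F" "\<forall>f\<in>F. primeideal f R" "\<forall>Q. primeideal Q R \<longrightarrow> (\<exists>f\<in>F. f \<subseteq> Q)"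
    using finite_minimal_primes by blast
  have SS: "S \<subseteq> Spec R" and sp: "\<And>P Q. P \<in> S \<Longrightarrow> Q \<in> Spec R \<Longrightarrow> P \<subseteq> Q \<Longrightarrow> Q \<in> S"
    using S unfolding specialization_closed_def by blast+
  have minimal: "\<exists>f\<in>F. f \<subseteq> Q" if "Q \<in> Spec R" for Q using F(3) that unfolding mem_Spec_iff by blast
  have "S = {Q \<in> Spec R. \<exists>f\<in>F \<inter> S. f \<subseteq> Q}"
  proof (intro subset_antisym subsetI)
    fix Q assume "Q \<in> S"
    moreover obtain f where "f \<in> F" "f \<subseteq> Q" using minimal \<open>Q \<in> S\<close> SS by blast
    moreover have "f \<in> S" using gen \<open>Q \<in> S\<close> F(2) \<open>f \<in> F\<close> \<open>f \<subseteq> Q\<close> by blast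
    ultimately show "Q \<in> {Q \<in> Spec R. \<exists>f\<in>F \<inter> S. f \<subseteq> Q}" using SS by blast
  qed (use sp in blast)
  moreover have "Spec R - S = {Q \<in> Spec R. \<exists>f\<in>F - S. f \<subseteq> Q}"
  proof (intro subset_antisym subsetI)
    fix Q assume Q: "Q \<in> Spec R - S"
    then obtain f where "f \<in> F" "f \<subseteq> Q" using minimal by blast
    moreover have "f \<notin> S" using sp Q \<open>f \<subseteq> Q\<close> by blast
    ultimately show "Q \<in> {Q \<in> Spec R. \<exists>f\<in>F - S. f \<subseteq> Q}" using Q by blast
  next
    fix Q assume "Q \<in> {Q \<in> Spec R. \<exists>f\<in>F - S. f \<subseteq> Q}"
    then obtain f where f: "Q \<in> Spec R" "f \<in> F" "f \<notin> S" "f \<subseteq> Q" by blast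
    have "Q \<notin> S" using gen[of Q f] F(2) f(2-4) by blast
    thus "Q \<in> Spec R - S" using f(1) by blast
  qed
  ultimately show ?thesis
    using zariski_closed_finite_union[of "F \<inter> S"] zariski_closed_finite_union[of "F - S"] F(1,2) SS
    unfolding zariski_open_def by auto
qed

text \<open>A maximal counterexample \<open>T\<close> between \<open>P\<close> and \<open>Q\<close> has a covering prime \<open>T' \<subseteq> Q\<close>,
  which is no counterexample, and the weak Cousin condition passes from \<open>T'\<close> to \<open>T\<close>.\<close>

lemma weak_cousin_descends:
  assumes wc: "weak_cousin R \<phi>" and P: "primeideal P R" and Q: "primeideal Q R" "P \<subseteq> Q"
  shows "\<exists>n::nat. \<forall>j. Q \<in> \<phi> j \<longrightarrow> P \<in> \<phi> (j - int n)"
proof (rule ccontr)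
  assume nm: "\<not> ?thesis"
  let ?reach = "\<lambda>T. \<exists>n::nat. \<forall>j. Q \<in> \<phi> j \<longrightarrow> T \<in> \<phi> (j - int n)"
  let ?Bad = "{T. primeideal T R \<and> P \<subseteq> T \<and> T \<subseteq> Q \<and> \<not> ?reach T}"
  have "P \<in> ?Bad" using P Q(2) nm by simp
  hence ne: "?Bad \<noteq> {}" by blast
  have fam: "\<And>I. I \<in> ?Bad \<Longrightarrow> ideal I R" by (simp add: primeideal.axioms(1))
  have "\<exists>M\<in>?Bad. \<forall>X\<in>?Bad. M \<subseteq> X \<longrightarrow> X = M" using ne fam by (rule ideal_family_has_maximal)
  then obtain T where TB: "T \<in> ?Bad" and Tmax: "\<forall>X\<in>?Bad. T \<subseteq> X \<longrightarrow> X = T" ..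
  hence T: "primeideal T R" "P \<subseteq> T" "T \<subseteq> Q" and Tn: "\<not> ?reach T" by simp_all
  have "T \<noteq> Q"
  proof
    assume "T = Q"
    moreover have "?reach Q" by (rule exI[of _ 0]) simp
    ultimately show False using Tn by simp
  qed
  hence "T \<subset> Q" using T(3) by blast
  then obtain T' where T': "primeideal T' R" "T \<subset> T'" "T' \<subseteq> Q"
    and cover: "\<forall>p. primeideal p R \<and> T \<subseteq> p \<and> p \<subseteq> T' \<longrightarrow> p = T \<or> p = T'"
    using exists_covering_prime[OF T(1) Q(1)] by blast
  have "T' \<notin> ?Bad" using Tmax T'(2) by blast
  moreover have "P \<subseteq> T'" using T(2) T'(2) by blast
  ultimately obtain n where n: "\<forall>j. Q \<in> \<phi> j \<longrightarrow> T' \<in> \<phi> (j - int n)" using T'(1,3) by blast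
  have "\<not> (\<exists>X\<in>Spec R. T \<subset> X \<and> X \<subset> T')" using cover by (auto simp: mem_Spec_iff)
  hence "T' \<in> \<phi> i \<Longrightarrow> T \<in> \<phi> (i - 1)" for i
    using wc[unfolded weak_cousin_def, rule_format, of T T' i] T(1) T'(1,2)
    unfolding mem_Spec_iff by blast
  hence "\<forall>j. Q \<in> \<phi> j \<longrightarrow> T \<in> \<phi> (j - int n - 1)" using n by blast
  hence "\<forall>j. Q \<in> \<phi> j \<longrightarrow> T \<in> \<phi> (j - int (Suc n))" by (simp add: diff_diff_eq add.commute)
  thus False using Tn by blast
qed

end

lemma sp_filtration_antimono:
  assumes "sp_filtration R \<phi>" "i \<le> j"
  shows "\<phi> j \<subseteq> \<phi> i"
proof -
  have "\<phi> (i + int k) \<subseteq> \<phi> i" for k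
  proof (induction k)
    case (Suc k)
    have "\<phi> (i + int (Suc k)) = \<phi> ((i + int k) + 1)" by (simp add: algebra_simps)
    also have "\<dots> \<subseteq> \<phi> (i + int k)" using assms(1) unfolding sp_filtration_def by blast
    finally show ?case using Suc.IH by blast
  qed simp
  thus ?thesis using assms(2) by (metis zle_iff_zadd)
qed

lemma sp_filtration_finite_level:
  assumes "sp_filtration R \<phi>" "finite X" "\<And>f. f \<in> X \<Longrightarrow> \<exists>i. f \<in> \<phi> i"
  shows "\<exists>j. X \<subseteq> \<phi> j"
  using assms(2,3)
proof (induction X rule: finite_induct)
  case (insert f X)
  then obtain i j where "f \<in> \<phi> i" "X \<subseteq> \<phi> j" by blast
  moreover have "\<phi> i \<subseteq> \<phi> (min i j)" "\<phi> j \<subseteq> \<phi> (min i j)"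
    using sp_filtration_antimono[OF assms(1)] by simp_all
  ultimately show ?case by blast
qed simp

context noetherian_cring
begin

context
  fixes \<phi> :: "int \<Rightarrow> 'a set set"
  assumes filtration: "sp_filtration R \<phi>" and cousin: "weak_cousin R \<phi>"
begin

lemma level_specialization_closed: "specialization_closed R (\<phi> i)"
  using filtration unfolding sp_filtration_def by blast

lemma level_descends:
  assumes "Q \<in> \<phi> i" "primeideal P R" "P \<subseteq> Q"
  shows "\<exists>n::nat. \<forall>j. Q \<in> \<phi> j \<longrightarrow> P \<in> \<phi> (j - int n)"
  using weak_cousin_descends[OF cousin assms(2) specialization_closedD(1)[OF level_specialization_closed assms(1)]
      assms(3)] .

lemma Union_levels_clopen: "zariski_closed R (\<Union>i. \<phi> i) \<and> zariski_open R (\<Union>i. \<phi> i)"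
proof (rule zariski_clopen_if_stable[OF specialization_closed_UN[OF level_specialization_closed]])
  fix P Q assume "Q \<in> (\<Union>i. \<phi> i)" "primeideal P R" "P \<subseteq> Q"
  moreover from this obtain i where i: "Q \<in> \<phi> i" by blast
  ultimately obtain n where "\<forall>j. Q \<in> \<phi> j \<longrightarrow> P \<in> \<phi> (j - int n)" using level_descends by blast
  thus "P \<in> (\<Union>i. \<phi> i)" using i by blast
qed

lemma Inter_levels_clopen: "zariski_closed R (\<Inter>i. \<phi> i) \<and> zariski_open R (\<Inter>i. \<phi> i)"
proof (rule zariski_clopen_if_stable[OF specialization_closed_INT[OF level_specialization_closed]])
  fix P Q assume Q: "Q \<in> (\<Inter>i. \<phi> i)" and P: "primeideal P R" "P \<subseteq> Q"
  have "Q \<in> \<phi> 0" using Q by blast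
  then obtain n where n: "\<forall>j. Q \<in> \<phi> j \<longrightarrow> P \<in> \<phi> (j - int n)" using level_descends P by blast
  have "Q \<in> \<phi> (i + int n)" for i using Q by blast
  hence "P \<in> \<phi> (i + int n - int n)" for i using n by blast
  thus "P \<in> (\<Inter>i. \<phi> i)" by simp
qed

text \<open>Every prime of \<open>\<Union>i. \<phi> i\<close> lies above a minimal prime in it, and the finitely many
  of those all lie in one level.\<close>

lemma Union_levels_attained: "\<exists>j0. \<phi> j0 = (\<Union>i. \<phi> i)"
proof -
  obtain F where F: "finite F" "\<forall>f\<in>F. primeideal f R" "\<forall>Q. primeideal Q R \<longrightarrow> (\<exists>f\<in>F. f \<subseteq> Q)"
    using finite_minimal_primes by blast
  have "\<exists>j. F \<inter> (\<Union>i. \<phi> i) \<subseteq> \<phi> j"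
    using F(1) by (intro sp_filtration_finite_level[OF filtration]) auto
  then obtain j0 where j0: "F \<inter> (\<Union>i. \<phi> i) \<subseteq> \<phi> j0" ..
  have "(\<Union>i. \<phi> i) \<subseteq> \<phi> j0"
  proof
    fix Q assume "Q \<in> (\<Union>i. \<phi> i)"
    then obtain i where Q: "Q \<in> \<phi> i" by blast
    have Qp: "primeideal Q R" using specialization_closedD(1)[OF level_specialization_closed Q] .
    then obtain f where f: "f \<in> F" "f \<subseteq> Q" using F(3) by blast
    have fp: "primeideal f R" using F(2) f(1) by blast
    obtain n where "\<forall>j. Q \<in> \<phi> j \<longrightarrow> f \<in> \<phi> (j - int n)" using level_descends[OF Q fp f(2)] ..
    hence "f \<in> \<phi> j0" using Q f(1) j0 by blast
    thus "Q \<in> \<phi> j0" using specialization_closedD(2)[OF level_specialization_closed _ Qp f(2)] by blast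
  qed
  thus ?thesis by blast
qed

end

end

theorem proposition4p9:
  fixes R :: "('a, 'b) ring_scheme" and \<phi> :: "int \<Rightarrow> 'a set set"
  assumes "cring R" and "noetherian_ring R"
    and "sp_filtration R \<phi>" and "weak_cousin R \<phi>"
  shows "\<exists>j0. (\<forall>j \<le> j0. \<phi> j = \<phi> j0) \<and> zariski_open R (\<phi> j0) \<and> zariski_closed R (\<phi> j0)
         \<and> zariski_open R (\<Inter>i. \<phi> i) \<and> zariski_closed R (\<Inter>i. \<phi> i)"
proof -
  interpret noetherian_cring R using assms(1,2) by (simp add: noetherian_cring_def)
  obtain j0 where j0: "\<phi> j0 = (\<Union>i. \<phi> i)" using Union_levels_attained[OF assms(3,4)] ..
  have "\<phi> j = \<phi> j0" if "j \<le> j0" for j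
    using sp_filtration_antimono[OF assms(3) that] j0 by blast
  thus ?thesis
    using j0 Union_levels_clopen[OF assms(3,4)] Inter_levels_clopen[OF assms(3,4)]
    by (intro exI[of _ j0]) simp
qed

end
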